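(* Let $n\ge2$, $\alpha\in(-n,0)$ and let $\phi$ be a Young function satisfying $\underline\Lambda_\phi(\alpha)<\infty$ and $\overline\Lambda_\phi(\alpha)<\infty$. (i) If $\Omega\subset\mathbb R^n$ is a bounded globally $n$-regular domain with constant $\theta$, then there exists a constant $C>0$ depending only on $n,\alpha,\phi,\theta$ such that $\|u-u_\Omega\|_{L^{n/|\alpha|}(\Omega)}\le C\|u\|_{\dot{\mathbf B}^{\alpha,\phi}(\Omega)}$ for all $u\in\dot{\mathbf B}^{\alpha,\phi}(\Omega)$. (ii) If $\Omega\subset\mathbb R^n$ is an unbounded globally $n$-regular domain with constant $\theta$, then there exists a constant $C>0$ depending only on $n,\alpha,\phi,\theta$ such that $\|u\|_{L^{n/|\alpha|}(\Omega)}\le C\|u\|_{\dot{\mathbf B}^{\alpha,\phi}(\Omega)}$ for all $u\in\dot{\mathbf B}^{\alpha,\phi}(\Omega)$ with $|\{x\in\Omega:|u(x)|>a\}|<\infty$ for all $a>0$.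
   Context: A Young function is $\phi\in C([0,\infty))$, convex, with $\phi(0)=0$, $\phi(t)>0$ for $t>0$, $\lim_{t\to\infty}\phi(t)=\infty$. $\underline\Lambda_\phi(\alpha):=\sup_{x>0}\int_0^1\frac{\phi(t^{1-\alpha}x)}{\phi(x)}\frac{dt}{t^{n+1}}$, $\overline\Lambda_\phi(\alpha):=\sup_{x>0}\int_1^\infty\frac{\phi(t^{-\alpha}x)}{\phi(x)}\frac{dt}{t^{n+1}}$. $\dot{\mathbf B}^{\alpha,\phi}(\Omega)$ is the space of measurable $u$ on $\Omega$ with finite $\|u\|_{\dot{\mathbf B}^{\alpha,\phi}(\Omega)}:=\inf\{\lambda>0:\int_\Omega\int_\Omega\phi(\frac{|u(x)-u(y)|}{\lambda|x-y|^{\alpha}})\frac{dx\,dy}{|x-y|^{2n}}\le1\}$. $u_\Omega$ is the average of $u$ over $\Omega$. A domain $\Omega$ is globally $n$-regular (with constant $\theta\in(0,1)$) if $|B(x,r)\cap\Omega|\ge\theta r^n$ for all $x\in\Omega$ and all $0<r<2\operatorname{diam}\Omega$. *)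

theory Defs
  imports "HOL-Analysis.Analysis"
begin

definition young_function :: "(real \<Rightarrow> real) \<Rightarrow> bool" where
  "young_function \<phi> \<longleftrightarrow>
     continuous_on {0..} \<phi> \<and> convex_on {0..} \<phi> \<and> \<phi> 0 = 0 \<and>
     (\<forall>t>0. \<phi> t > 0) \<and> filterlim \<phi> at_top at_top"

definition Lambda_lower :: "nat \<Rightarrow> (real \<Rightarrow> real) \<Rightarrow> real \<Rightarrow> ennreal" where
  "Lambda_lower n \<phi> \<alpha> = (SUP x\<in>{0<..}.
     \<integral>\<^sup>+ t\<in>{0<..<1}. ennreal (\<phi> (t powr (1 - \<alpha>) * x) / \<phi> x / t ^ (n + 1)) \<partial>lborel)"

definition Lambda_upper :: "nat \<Rightarrow> (real \<Rightarrow> real) \<Rightarrow> real \<Rightarrow> ennreal" where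
  "Lambda_upper n \<phi> \<alpha> = (SUP x\<in>{0<..}.
     \<integral>\<^sup>+ t\<in>{1<..}. ennreal (\<phi> (t powr (- \<alpha>) * x) / \<phi> x / t ^ (n + 1)) \<partial>lborel)"

text \<open>Besov-Orlicz modular and (Luxemburg-type) seminorm, valued in ennreal
  (the infimum of the empty set is infinity).\<close>
definition besov_modular ::
  "real \<Rightarrow> (real \<Rightarrow> real) \<Rightarrow> (real^'n) set \<Rightarrow> (real^'n \<Rightarrow> real) \<Rightarrow> real \<Rightarrow> ennreal" where
  "besov_modular \<alpha> \<phi> \<Omega> u s =
     (\<integral>\<^sup>+ x\<in>\<Omega>. (\<integral>\<^sup>+ y\<in>\<Omega>.
        ennreal (\<phi> (\<bar>u x - u y\<bar> / (s * dist x y powr \<alpha>)) / dist x y ^ (2 * CARD('n)))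
      \<partial>lebesgue) \<partial>lebesgue)"

definition besov_norm ::
  "real \<Rightarrow> (real \<Rightarrow> real) \<Rightarrow> (real^'n) set \<Rightarrow> (real^'n \<Rightarrow> real) \<Rightarrow> ennreal" where
  "besov_norm \<alpha> \<phi> \<Omega> u = Inf {ennreal s | s. s > 0 \<and> besov_modular \<alpha> \<phi> \<Omega> u s \<le> 1}"

definition besov_space ::
  "real \<Rightarrow> (real \<Rightarrow> real) \<Rightarrow> (real^'n) set \<Rightarrow> (real^'n \<Rightarrow> real) set" where
  "besov_space \<alpha> \<phi> \<Omega> =
     {u. u \<in> borel_measurable (lebesgue_on \<Omega>) \<and> besov_norm \<alpha> \<phi> \<Omega> u < \<infinity>}"

definition Lp_norm :: "real \<Rightarrow> (real^'n) set \<Rightarrow> (real^'n \<Rightarrow> real) \<Rightarrow> ennreal" where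
  "Lp_norm p \<Omega> f =
     (let I = (\<integral>\<^sup>+ x\<in>\<Omega>. ennreal (\<bar>f x\<bar> powr p) \<partial>lebesgue)
      in if I = \<infinity> then \<infinity> else ennreal (enn2real I powr (1 / p)))"

definition avg :: "(real^'n) set \<Rightarrow> (real^'n \<Rightarrow> real) \<Rightarrow> real" where
  "avg \<Omega> u = (\<integral>x\<in>\<Omega>. u x \<partial>lebesgue) / measure lebesgue \<Omega>"

definition domain :: "(real^'n) set \<Rightarrow> bool" where
  "domain \<Omega> \<longleftrightarrow> open \<Omega> \<and> connected \<Omega> \<and> \<Omega> \<noteq> {}"

text \<open>Global n-regularity; for unbounded \<Omega>, diam \<Omega> = \<infinity>, so all r > 0 are required.\<close>
definition globally_regular :: "real \<Rightarrow> (real^'n) set \<Rightarrow> bool" where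
  "globally_regular \<theta> \<Omega> \<longleftrightarrow> 0 < \<theta> \<and> \<theta> < 1 \<and>
     (\<forall>x\<in>\<Omega>. \<forall>r. 0 < r \<and> (\<not> bounded \<Omega> \<or> r < 2 * diameter \<Omega>) \<longrightarrow>
        emeasure lebesgue (ball x r \<inter> \<Omega>) \<ge> ennreal (\<theta> * r ^ CARD('n)))"

end

theory Submission
  imports Defs
begin

(* Let q = n/|alpha|, let w = u/s for an admissible scale s of the Besov norm, and let F(x) be
   the inner integral of the modular of w at x, so that the integral of F over Omega is at
   most 1. For v = (w - m)_+ and a(l) = |{v > l}|, every x with v(x) >= 2l differs from v by
   at least l on the complement of {v > l}, and global regularity places measure a(l)/2 of
   that complement at distances from x between rho and r, where rho^n and r^n are comparable
   to a(l). Hence F(x) >= c phi(l rho^|alpha|) / a(l). Integrating this over {v > 2l} gives a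
   recursion between a(2l) and a(l) which, since phi has upper type q, forces the weak type
   bound l^q a(l) <= T. Fed back into the lower bound for F, it yields v(x)^q <= K F(x), hence
   the integral of v^q is at most K. For bounded Omega, m is a median of w (used for w and -w),
   and the mean of w lies within (K/|Omega|)^(1/q) of m; for unbounded Omega, m = 0 and the
   finiteness of the level sets of u takes the place of the median.
   Only the upper type of phi, a consequence of the finiteness of the upper index, is used. *)

section \<open>Young functions\<close>

lemma young_function_pos:
  assumes "young_function \<phi>" "0 < z"
  shows "0 < \<phi> z"
  using assms unfolding young_function_def by auto

lemma young_function_nonneg:
  assumes "young_function \<phi>" "0 \<le> z"
  shows "0 \<le> \<phi> z"
  using assms young_function_pos[OF assms(1)] unfolding young_function_def
  by (cases "z = 0") (auto intro: less_imp_le)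

lemma young_function_scale_le:
  assumes "young_function \<phi>" "0 \<le> \<tau>" "\<tau> \<le> 1" "0 \<le> z"
  shows "\<phi> (\<tau> * z) \<le> \<tau> * \<phi> z"
proof -
  have cv: "convex_on {0..} \<phi>" and "\<phi> 0 = 0"
    using assms(1) unfolding young_function_def by auto
  have "\<phi> ((1 - \<tau>) *\<^sub>R 0 + \<tau> *\<^sub>R z) \<le> (1 - \<tau>) * \<phi> 0 + \<tau> * \<phi> z"
    by (rule convex_onD[OF cv]) (use assms in auto)
  then show ?thesis using \<open>\<phi> 0 = 0\<close> by simp
qed

lemma young_function_scale_ge:
  assumes "young_function \<phi>" "1 \<le> \<sigma>" "0 \<le> y"
  shows "\<sigma> * \<phi> y \<le> \<phi> (\<sigma> * y)"
proof -
  have "\<phi> ((1/\<sigma>) * (\<sigma> * y)) \<le> (1/\<sigma>) * \<phi> (\<sigma> * y)"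
    by (rule young_function_scale_le[OF assms(1)]) (use assms in auto)
  then show ?thesis using assms(2) by (simp add: field_simps)
qed

lemma young_function_mono:
  assumes "young_function \<phi>" "0 \<le> a" "a \<le> b"
  shows "\<phi> a \<le> \<phi> b"
proof (cases "b = 0")
  case True
  then show ?thesis using assms by simp
next
  case False
  then have b: "b > 0" using assms by simp
  have "\<phi> ((a/b) * b) \<le> (a/b) * \<phi> b"
    by (rule young_function_scale_le[OF assms(1)]) (use assms b in auto)
  also have "\<dots> \<le> 1 * \<phi> b"
    using young_function_pos[OF assms(1) b] assms b by (intro mult_right_mono) auto
  finally show ?thesis using b by simp
qed

definition upper_type :: "(real \<Rightarrow> real) \<Rightarrow> real \<Rightarrow> real \<Rightarrow> bool" where
  "upper_type \<phi> p C \<longleftrightarrow> (\<forall>x>0. \<forall>\<mu>\<ge>1. \<phi> (\<mu> * x) \<le> C * \<mu> powr p * \<phi> x)"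

lemma upper_type_const_ge_one:
  assumes "young_function \<phi>" "upper_type \<phi> p C"
  shows "1 \<le> C"
proof -
  have "\<forall>x>0. \<forall>\<mu>\<ge>1. \<phi> (\<mu> * x) \<le> C * \<mu> powr p * \<phi> x"
    using assms(2) unfolding upper_type_def .
  then have "\<phi> (1 * 1) \<le> C * 1 powr p * \<phi> 1"
    using zero_less_one[where 'a=real] order_refl[of "1::real"] by blast
  then show ?thesis using young_function_pos[OF assms(1), of 1] by simp
qed

text \<open>Only the part of the integral over \<open>t \<in> (A, 2A)\<close>, \<open>A = \<mu> powr (1 / -\<alpha>)\<close>, is used.\<close>
lemma Lambda_upper_lower_bound:
  assumes yf: "young_function \<phi>" and a: "\<alpha> < 0" and x: "0 < x" and mu: "1 \<le> \<mu>"
  shows "ennreal (\<phi> (\<mu> * x) / \<phi> x / (2 * \<mu> powr (1 / -\<alpha>)) ^ (n+1) * \<mu> powr (1 / -\<alpha>))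
    \<le> Lambda_upper n \<phi> \<alpha>"
proof -
  define \<beta> where "\<beta> = - \<alpha>"
  have b: "\<beta> > 0" using a by (simp add: \<beta>_def)
  define A where "A = \<mu> powr (1/\<beta>)"
  have A1: "1 \<le> A" unfolding A_def using mu b by (simp add: ge_one_powr_ge_zero)
  have phx: "\<phi> x > 0" using young_function_pos[OF yf x] .
  define K where "K = \<phi> (\<mu> * x) / \<phi> x / (2*A) ^ (n+1)"
  have K0: "K \<ge> 0" unfolding K_def using phx young_function_nonneg[OF yf, of "\<mu>*x"] mu x A1 by simp
  have "ennreal (K * A) = (\<integral>\<^sup>+ t. ennreal K * indicator {A<..<2*A} t \<partial>lborel)"
    using A1 K0 by (subst nn_integral_cmult_indicator) (auto simp: ennreal_mult')
  also have "\<dots> \<le> (\<integral>\<^sup>+ t\<in>{1<..}. ennreal (\<phi> (t powr (- \<alpha>) * x) / \<phi> x / t ^ (n + 1)) \<partial>lborel)"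
  proof (rule nn_integral_mono)
    fix t
    show "ennreal K * indicator {A<..<2*A} t
      \<le> ennreal (\<phi> (t powr (- \<alpha>) * x) / \<phi> x / t ^ (n + 1)) * indicator {1<..} t"
    proof (cases "t \<in> {A<..<2*A}")
      case True
      then have t: "A < t" "t < 2*A" by auto
      have t1: "1 < t" using t A1 by simp
      have "\<mu> = A powr \<beta>" unfolding A_def using b mu by (simp add: powr_powr)
      also have "\<dots> \<le> t powr \<beta>" using t A1 b by (intro powr_mono2) auto
      finally have "\<mu> * x \<le> t powr (-\<alpha>) * x" using x by (simp add: \<beta>_def)
      then have p: "\<phi> (\<mu> * x) \<le> \<phi> (t powr (-\<alpha>) * x)" using young_function_mono[OF yf] mu x by simp
      have q: "t ^ (n+1) \<le> (2*A) ^ (n+1)" using t t1 by (intro power_mono) auto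
      have "K \<le> \<phi> (t powr (- \<alpha>) * x) / \<phi> x / t ^ (n + 1)"
        unfolding K_def using p q phx t1 young_function_nonneg[OF yf, of "\<mu>*x"] mu x
        by (intro frac_le divide_right_mono) auto
      then show ?thesis using True t1 by (simp add: ennreal_leI)
    qed simp
  qed
  also have "\<dots> \<le> Lambda_upper n \<phi> \<alpha>" unfolding Lambda_upper_def
    by (rule SUP_upper) (use x in auto)
  finally show ?thesis unfolding K_def A_def \<beta>_def .
qed

lemma upper_type_if_Lambda_upper_finite:
  assumes yf: "young_function \<phi>" and a: "\<alpha> < 0" and L: "Lambda_upper n \<phi> \<alpha> < \<infinity>"
  shows "upper_type \<phi> (real n / (-\<alpha>)) (2 ^ (n+1) * enn2real (Lambda_upper n \<phi> \<alpha>))"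
  unfolding upper_type_def
proof (intro allI impI)
  fix x \<mu> :: real
  assume x: "0 < x" and mu: "1 \<le> \<mu>"
  define A where "A = \<mu> powr (1 / -\<alpha>)"
  have A1: "1 \<le> A" unfolding A_def using mu a by (simp add: ge_one_powr_ge_zero)
  have phx: "\<phi> x > 0" using young_function_pos[OF yf x] .
  define K where "K = \<phi> (\<mu> * x) / \<phi> x / (2*A) ^ (n+1)"
  have K0: "K \<ge> 0" unfolding K_def using phx young_function_nonneg[OF yf, of "\<mu>*x"] mu x A1 by simp
  have "ennreal (K * A) \<le> Lambda_upper n \<phi> \<alpha>"
    using Lambda_upper_lower_bound[OF yf a x mu, of n] unfolding K_def A_def .
  then have KA: "K * A \<le> enn2real (Lambda_upper n \<phi> \<alpha>)"
    using enn2real_mono L K0 A1 by fastforce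
  have eq: "\<phi> (\<mu> * x) = (K * A) * 2 ^ (n+1) * A ^ n * \<phi> x"
    unfolding K_def using phx A1 by (simp add: field_simps)
  have An: "A ^ n = \<mu> powr (real n / (-\<alpha>))"
    unfolding A_def using mu a by (simp add: powr_realpow[symmetric] powr_powr)
  have "\<phi> (\<mu> * x) \<le> enn2real (Lambda_upper n \<phi> \<alpha>) * 2 ^ (n+1) * A ^ n * \<phi> x"
    unfolding eq using KA phx A1 by (intro mult_right_mono) auto
  then show "\<phi> (\<mu> * x) \<le> 2 ^ (n+1) * enn2real (Lambda_upper n \<phi> \<alpha>) * \<mu> powr (real n / - \<alpha>) * \<phi> x"
    using An by (simp add: ac_simps)
qed

section \<open>Distribution functions under a halving recursion\<close>

definition halving_bound :: "real \<Rightarrow> real \<Rightarrow> real \<Rightarrow> real \<Rightarrow> real" where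
  "halving_bound q c C p = max 1 (max (2 powr q * C / (c * p)) ((2 powr q / (c * p)) powr q))"

locale halving_recursion =
  fixes q c C A :: real and \<psi> a :: "real \<Rightarrow> real"
  assumes q_ge_one: "1 \<le> q" and c_pos: "0 < c"
    and psi_pos: "\<And>t. 0 < t \<Longrightarrow> 0 < \<psi> t"
    and psi_doubling: "\<And>t t'. 0 < t \<Longrightarrow> t \<le> t' \<Longrightarrow> \<psi> t' \<le> C * (t'/t) * \<psi> t"
    and psi_growth: "\<And>t. 1 \<le> t \<Longrightarrow> t powr (1/q) * \<psi> 1 \<le> \<psi> t"
    and a_nonneg: "\<And>l. 0 \<le> a l"
    and a_antimono: "\<And>l l'. 0 < l \<Longrightarrow> l \<le> l' \<Longrightarrow> a l' \<le> a l"
    and a_bounded: "\<And>l. 0 < l \<Longrightarrow> a l \<le> A"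
    and recursion: "\<And>l. 0 < l \<Longrightarrow> 0 < a (l/2) \<Longrightarrow> a l * c * \<psi> ((l/2) powr q * a (l/2)) / a (l/2) \<le> 1"
begin

lemma halving_bound_ge_one: "1 \<le> halving_bound q c C (\<psi> 1)"
  unfolding halving_bound_def by simp

lemma ratio_le_halving_bound:
  assumes "0 < \<tau>" "\<tau> \<le> halving_bound q c C (\<psi> 1)"
  shows "2 powr q / c * (\<tau> / \<psi> \<tau>) \<le> halving_bound q c C (\<psi> 1)"
proof -
  define T where "T = halving_bound q c C (\<psi> 1)"
  have ps: "\<psi> \<tau> > 0" "\<psi> 1 > 0" using psi_pos assms by auto
  show ?thesis
  proof (cases "\<tau> \<le> 1")
    case True
    have "\<psi> 1 \<le> C * (1/\<tau>) * \<psi> \<tau>" using psi_doubling[of \<tau> 1] assms True by simp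
    then have "\<tau> / \<psi> \<tau> \<le> C / \<psi> 1" using assms ps by (simp add: field_simps)
    then have "2 powr q / c * (\<tau> / \<psi> \<tau>) \<le> 2 powr q / c * (C / \<psi> 1)" using c_pos
      by (intro mult_left_mono) auto
    also have "\<dots> \<le> T" unfolding T_def halving_bound_def by (simp add: field_simps)
    finally show ?thesis unfolding T_def .
  next
    case False
    define C2 where "C2 = 2 powr q / (c * \<psi> 1)"
    have C20: "C2 > 0" unfolding C2_def using c_pos ps by simp
    have "\<tau> powr (1/q) * \<psi> 1 \<le> \<psi> \<tau>" using psi_growth False by simp
    then have "\<tau> / \<psi> \<tau> \<le> \<tau> / (\<tau> powr (1/q) * \<psi> 1)" using assms ps
      by (intro divide_left_mono) auto
    also have "\<tau> / (\<tau> powr (1/q) * \<psi> 1) = \<tau> powr (1 - 1/q) / \<psi> 1"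
      using assms by (simp add: powr_diff)
    finally have "2 powr q / c * (\<tau> / \<psi> \<tau>) \<le> 2 powr q / c * (\<tau> powr (1 - 1/q) / \<psi> 1)"
      using c_pos by (intro mult_left_mono) auto
    also have "\<dots> = C2 * \<tau> powr (1 - 1/q)" unfolding C2_def by simp
    also have "\<dots> \<le> C2 * T powr (1 - 1/q)" using assms q_ge_one C20 unfolding T_def
      by (intro mult_left_mono powr_mono2) auto
    also have "C2 \<le> T powr (1/q)"
    proof -
      have "C2 powr q \<le> T" unfolding T_def halving_bound_def C2_def by simp
      then have "(C2 powr q) powr (1/q) \<le> T powr (1/q)" using C20 q_ge_one by (intro powr_mono2) auto
      then show ?thesis using C20 q_ge_one by (simp add: powr_powr)
    qed
    then have "C2 * T powr (1 - 1/q) \<le> T powr (1/q) * T powr (1 - 1/q)" by (intro mult_right_mono) auto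
    also have "\<dots> = T" using halving_bound_ge_one unfolding T_def by (simp add: powr_add[symmetric])
    finally show ?thesis unfolding T_def .
  qed
qed

lemma halving_step:
  assumes l: "0 < l" and prev: "(l/2) powr q * a (l/2) \<le> halving_bound q c C (\<psi> 1)"
  shows "l powr q * a l \<le> halving_bound q c C (\<psi> 1)"
proof (cases "a (l/2) = 0")
  case True
  then have "a l = 0" using a_antimono[of "l/2" l] a_nonneg[of l] l by simp
  then show ?thesis using halving_bound_ge_one by simp
next
  case False
  then have pos: "0 < a (l/2)" using a_nonneg[of "l/2"] by simp
  define \<tau> where "\<tau> = (l/2) powr q * a (l/2)"
  have tau0: "\<tau> > 0" unfolding \<tau>_def using l pos by simp
  have "a l \<le> a (l/2) / (c * \<psi> \<tau>)"
    using recursion[OF l pos] psi_pos[OF tau0] c_pos pos unfolding \<tau>_def[symmetric]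
    by (simp add: field_simps)
  then have "l powr q * a l \<le> l powr q * (a (l/2) / (c * \<psi> \<tau>))" using l by (intro mult_left_mono) auto
  also have "\<dots> = 2 powr q / c * (\<tau> / \<psi> \<tau>)"
    using l by (simp add: \<tau>_def powr_divide)
  also have "\<dots> \<le> halving_bound q c C (\<psi> 1)"
    using tau0 prev unfolding \<tau>_def by (intro ratio_le_halving_bound)
  finally show ?thesis .
qed

lemma weak_type_after_halvings:
  assumes "0 < l" "(l / 2^N) powr q * A \<le> 1"
  shows "l powr q * a l \<le> halving_bound q c C (\<psi> 1)"
  using assms
proof (induction N arbitrary: l)
  case 0
  have "l powr q * a l \<le> l powr q * A" using a_bounded[OF 0(1)] by (intro mult_left_mono) auto
  then show ?case using 0(2) halving_bound_ge_one by simp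
next
  case (Suc N)
  have "((l/2) / 2^N) powr q * A \<le> 1" using Suc(3) by (simp add: field_simps)
  then have "(l/2) powr q * a (l/2) \<le> halving_bound q c C (\<psi> 1)"
    using Suc.IH[of "l/2"] Suc.prems(1) by simp
  then show ?case by (rule halving_step[OF Suc.prems(1)])
qed

text \<open>Boundedness of \<open>a\<close> gives \<open>l powr q * a l \<le> 1\<close> for small \<open>l\<close>; the recursion then
  carries the bound from \<open>l/2\<close> to \<open>l\<close>.\<close>
lemma weak_type:
  assumes l: "0 < l"
  shows "l powr q * a l \<le> halving_bound q c C (\<psi> 1)"
proof -
  have A0: "0 \<le> A" using a_nonneg[of 1] a_bounded[of 1] by simp
  obtain N where N: "l * (A+1) < 2^N" using real_arch_pow[of 2 "l * (A+1)"] by auto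
  have lN: "l / 2^N < 1 / (A+1)" using N A0 by (simp add: field_simps)
  moreover have "1 / (A+1) \<le> 1" using A0 by simp
  ultimately have "l / 2^N \<le> 1" by linarith
  then have "(l / 2^N) powr q \<le> (l / 2^N) powr 1"
    using q_ge_one l by (intro powr_mono') auto
  then have "(l / 2^N) powr q * A \<le> 1 / (A+1) * A" using lN l A0 by (intro mult_right_mono) auto
  also have "\<dots> \<le> 1" using A0 by (simp add: field_simps)
  finally show ?thesis by (rule weak_type_after_halvings[OF l])
qed

end

text \<open>\<open>ball_profile \<phi> n \<beta> t = \<phi> (\<rho> powr \<beta>)\<close>, where \<open>\<rho>\<close> is the radius of an \<open>n\<close>-ball of
  measure \<open>t/2\<close>.\<close>
definition ball_profile :: "(real \<Rightarrow> real) \<Rightarrow> nat \<Rightarrow> real \<Rightarrow> real \<Rightarrow> real" where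
  "ball_profile \<phi> n \<beta> t = \<phi> ((t / (2 * unit_ball_vol (real n))) powr (\<beta> / real n))"

lemma unit_ball_vol_of_nat_pos: "0 < unit_ball_vol (real n)"
  by (rule unit_ball_vol_pos) simp

lemma unit_ball_vol_of_nat_neq_0 [simp]: "unit_ball_vol (real n) \<noteq> 0"
  using unit_ball_vol_of_nat_pos[of n] by linarith

lemma ball_profile_pos:
  assumes "young_function \<phi>" "0 < t"
  shows "0 < ball_profile \<phi> n \<beta> t"
proof -
  have "0 < (t / (2 * unit_ball_vol (real n))) powr (\<beta> / real n)"
    using assms(2) by simp
  then show ?thesis unfolding ball_profile_def by (rule young_function_pos[OF assms(1)])
qed

lemma ball_profile_doubling:
  assumes "0 < \<beta>" "1 \<le> n" "upper_type \<phi> (real n / \<beta>) C" "0 < t" "t \<le> t'"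
  shows "ball_profile \<phi> n \<beta> t' \<le> C * (t'/t) * ball_profile \<phi> n \<beta> t"
proof -
  define \<omega> where "\<omega> = unit_ball_vol (real n)"
  have \<omega>: "\<omega> > 0" unfolding \<omega>_def by (rule unit_ball_vol_of_nat_pos)
  define x where "x = (t / (2 * \<omega>)) powr (\<beta> / real n)"
  define \<mu> where "\<mu> = (t'/t) powr (\<beta> / real n)"
  have "x > 0" unfolding x_def using assms \<omega> by simp
  moreover have "\<mu> \<ge> 1" unfolding \<mu>_def using assms by (intro ge_one_powr_ge_zero) auto
  ultimately have "\<phi> (\<mu> * x) \<le> C * \<mu> powr (real n / \<beta>) * \<phi> x"
    using assms(3) unfolding upper_type_def by blast
  moreover have "\<mu> * x = (t' / (2 * \<omega>)) powr (\<beta> / real n)"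
    unfolding \<mu>_def x_def using assms \<omega> by (simp add: powr_mult[symmetric])
  moreover have "\<mu> powr (real n / \<beta>) = t'/t"
    unfolding \<mu>_def using assms by (simp add: powr_powr)
  ultimately show ?thesis unfolding ball_profile_def by (simp add: x_def \<omega>_def)
qed

lemma ball_profile_growth:
  assumes "young_function \<phi>" "0 < \<beta>" "1 \<le> t"
  shows "t powr (\<beta> / real n) * ball_profile \<phi> n \<beta> 1 \<le> ball_profile \<phi> n \<beta> t"
proof -
  define \<omega> where "\<omega> = unit_ball_vol (real n)"
  have \<omega>: "\<omega> > 0" unfolding \<omega>_def by (rule unit_ball_vol_of_nat_pos)
  have "t powr (\<beta> / real n) * \<phi> ((1 / (2 * \<omega>)) powr (\<beta> / real n))
      \<le> \<phi> (t powr (\<beta> / real n) * (1 / (2 * \<omega>)) powr (\<beta> / real n))"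
    using assms \<omega> by (intro young_function_scale_ge ge_one_powr_ge_zero) auto
  also have "t powr (\<beta> / real n) * (1 / (2 * \<omega>)) powr (\<beta> / real n) = (t / (2 * \<omega>)) powr (\<beta> / real n)"
    using assms \<omega> by (simp add: powr_mult[symmetric])
  finally show ?thesis unfolding ball_profile_def \<omega>_def .
qed

lemma ball_profile_rescale:
  assumes "0 < l" "0 < e" "0 < \<beta>" "1 \<le> n"
  shows "\<phi> (l * (e / (2 * unit_ball_vol (real n))) powr (\<beta> / real n))
    = ball_profile \<phi> n \<beta> (l powr (real n / \<beta>) * e)"
proof -
  define \<omega> where "\<omega> = unit_ball_vol (real n)"
  have \<omega>: "\<omega> > 0" unfolding \<omega>_def by (rule unit_ball_vol_of_nat_pos)
  have "((l powr (real n / \<beta>) * e) / (2 * \<omega>)) powr (\<beta> / real n)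
      = (l powr (real n / \<beta>)) powr (\<beta> / real n) * (e / (2 * \<omega>)) powr (\<beta> / real n)"
    using assms \<omega> by (simp add: powr_mult[symmetric])
  also have "(l powr (real n / \<beta>)) powr (\<beta> / real n) = l"
    using assms by (simp add: powr_powr)
  finally show ?thesis unfolding ball_profile_def \<omega>_def by simp
qed

definition profile_bound :: "(real \<Rightarrow> real) \<Rightarrow> nat \<Rightarrow> real \<Rightarrow> real \<Rightarrow> real \<Rightarrow> real" where
  "profile_bound \<phi> n \<beta> \<theta> C = halving_bound (real n / \<beta>) (\<theta>^2/32) C (ball_profile \<phi> n \<beta> 1)"

definition pointwise_const :: "(real \<Rightarrow> real) \<Rightarrow> nat \<Rightarrow> real \<Rightarrow> real \<Rightarrow> real \<Rightarrow> real" where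
  "pointwise_const \<phi> n \<beta> \<theta> C = 2 powr (real n / \<beta>) * C * profile_bound \<phi> n \<beta> \<theta> C
     / (\<theta>^2/32 * ball_profile \<phi> n \<beta> (profile_bound \<phi> n \<beta> \<theta> C))"

lemma profile_bound_ge_one: "1 \<le> profile_bound \<phi> n \<beta> \<theta> C"
  unfolding profile_bound_def halving_bound_def by simp

lemma pointwise_const_pos:
  assumes "young_function \<phi>" "0 < \<theta>" "0 < C"
  shows "0 < pointwise_const \<phi> n \<beta> \<theta> C"
  unfolding pointwise_const_def using assms profile_bound_ge_one[of \<phi> n \<beta> \<theta> C]
  by (intro divide_pos_pos mult_pos_pos ball_profile_pos) auto

lemma emeasure_lebesgue_open_pos:
  fixes \<Omega> :: "'a::euclidean_space set"
  assumes "open \<Omega>" "\<Omega> \<noteq> {}"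
  shows "0 < emeasure lebesgue \<Omega>"
proof -
  obtain x where x: "x \<in> \<Omega>" using assms by auto
  obtain e where e: "0 < e" "ball x e \<subseteq> \<Omega>" using assms(1) x openE by blast
  have "0 < emeasure lebesgue (ball x e)" using e(1) by (simp add: emeasure_ball)
  also have "\<dots> \<le> emeasure lebesgue \<Omega>" using e assms by (intro emeasure_mono) auto
  finally show ?thesis .
qed

lemma (in finite_measure) exists_measure_decseq_less:
  assumes "range A \<subseteq> sets M" "decseq A" "(\<Inter>k. A k) = {}" "0 < \<epsilon>"
  shows "\<exists>k. measure M (A k) < \<epsilon>"
proof -
  have "(\<lambda>k. measure M (A k)) \<longlonglongrightarrow> 0" using finite_Lim_measure_decseq[OF assms(1,2)] assms(3) by simp
  then have "\<forall>\<^sub>F k in sequentially. measure M (A k) < \<epsilon>" using assms(4) by (intro order_tendstoD(2)) auto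
  then show ?thesis unfolding eventually_sequentially by blast
qed

lemma (in finite_measure) exists_small_tails:
  fixes f :: "'a \<Rightarrow> real"
  assumes f: "f \<in> borel_measurable M" and \<epsilon>: "0 < \<epsilon>"
  shows "\<exists>l. measure M {x\<in>space M. l < f x} < \<epsilon>" "\<exists>l. measure M {x\<in>space M. f x \<le> l} < \<epsilon>"
proof -
  have sets: "{x\<in>space M. l < f x} \<in> sets M" "{x\<in>space M. f x \<le> l} \<in> sets M" for l
    using f[unfolded borel_measurable_iff_greater] f[unfolded borel_measurable_iff_le] by blast+
  have "(\<Inter>k. {x\<in>space M. real k < f x}) = {}"
    by (auto intro: reals_Archimedean2 simp: not_less) (meson less_asym reals_Archimedean2)
  moreover have "decseq (\<lambda>k. {x\<in>space M. real k < f x})" by (auto simp: decseq_def)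
  ultimately show "\<exists>l. measure M {x\<in>space M. l < f x} < \<epsilon>"
    using exists_measure_decseq_less[of "\<lambda>k. {x\<in>space M. real k < f x}"] sets \<epsilon> by blast
  have "(\<Inter>k. {x\<in>space M. f x \<le> - real k}) = {}"
    by auto (metis minus_less_iff not_le reals_Archimedean2)
  moreover have "decseq (\<lambda>k. {x\<in>space M. f x \<le> - real k})" by (auto simp: decseq_def)
  ultimately show "\<exists>l. measure M {x\<in>space M. f x \<le> l} < \<epsilon>"
    using exists_measure_decseq_less[of "\<lambda>k. {x\<in>space M. f x \<le> - real k}"] sets \<epsilon> by blast
qed

lemma (in finite_measure) exists_median:
  fixes f :: "'a \<Rightarrow> real"
  assumes f: "f \<in> borel_measurable M"
  shows "\<exists>m. \<forall>l>0. 2 * measure M {x\<in>space M. m + l < f x} \<le> measure M (space M)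
                 \<and> 2 * measure M {x\<in>space M. f x < m - l} \<le> measure M (space M)"
proof (cases "measure M (space M) = 0")
  case True
  have "measure M A = 0" for A using bounded_measure[of A] measure_nonneg[of M A] True by linarith
  then show ?thesis by (simp add: True)
next
  case False
  define W where "W = measure M (space M)"
  have W0: "0 < W" using False unfolding W_def by (simp add: zero_less_measure_iff)
  have sets: "{x\<in>space M. l < f x} \<in> sets M" "{x\<in>space M. f x \<le> l} \<in> sets M"
    "{x\<in>space M. f x < l} \<in> sets M" for l
    using f[unfolded borel_measurable_iff_greater] f[unfolded borel_measurable_iff_le]
      f[unfolded borel_measurable_iff_less] by blast+
  define g where "g l = measure M {x\<in>space M. l < f x}" for l
  have g_antimono: "g l' \<le> g l" if "l \<le> l'" for l l'
    unfolding g_def using that sets by (intro finite_measure_mono) auto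
  have g_compl: "measure M {x\<in>space M. f x \<le> l} = W - g l" for l
  proof -
    have "{x\<in>space M. f x \<le> l} = space M - {x\<in>space M. l < f x}" by auto
    then show ?thesis unfolding g_def W_def using sets by (simp add: finite_measure_compl)
  qed
  obtain l1 where l1: "g l1 < W/2" using exists_small_tails(1)[OF f, of "W/2"] W0 unfolding g_def by auto
  obtain l2 where l2: "measure M {x\<in>space M. f x \<le> l2} < W/2"
    using exists_small_tails(2)[OF f, of "W/2"] W0 by auto
  define S where "S = {l. 2 * g l \<le> W}"
  have S_ne: "S \<noteq> {}" using l1 unfolding S_def by (intro ex_in_conv[THEN iffD1] exI[of _ l1]) simp
  have S_bdd: "bdd_below S"
  proof (rule bdd_belowI)
    fix l assume "l \<in> S"
    then show "l2 \<le> l"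
      using g_antimono[of l l2] l2 g_compl[of l2] unfolding S_def by fastforce
  qed
  show ?thesis
  proof (intro exI allI impI conjI)
    fix l :: real assume l: "0 < l"
    obtain \<mu> where "\<mu> \<in> S" "\<mu> < Inf S + l" using cInf_lessD[OF S_ne, of "Inf S + l"] l by auto
    then show "2 * measure M {x\<in>space M. Inf S + l < f x} \<le> measure M (space M)"
      using g_antimono[of \<mu> "Inf S + l"] unfolding S_def g_def W_def by simp
    have "Inf S - l \<notin> S" using cInf_lower[OF _ S_bdd, of "Inf S - l"] l by auto
    then have "2 * g (Inf S - l) > W" unfolding S_def by simp
    moreover have "measure M {x\<in>space M. f x < Inf S - l} \<le> measure M {x\<in>space M. f x \<le> Inf S - l}"
      using sets by (intro finite_measure_mono) auto
    ultimately show "2 * measure M {x\<in>space M. f x < Inf S - l} \<le> measure M (space M)"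
      using g_compl[of "Inf S - l"] unfolding W_def by simp
  qed
qed

lemma powr_add_le_two_powr:
  fixes a b q :: real
  assumes "0 \<le> a" "0 \<le> b" "0 < q"
  shows "(a + b) powr q \<le> 2 powr q * (a powr q + b powr q)"
proof -
  have "(a + b) powr q \<le> (2 * max a b) powr q" using assms by (intro powr_mono2) auto
  also have "\<dots> = 2 powr q * (max a b) powr q" using assms by (simp add: powr_mult)
  also have "(max a b) powr q \<le> a powr q + b powr q" using assms by (simp add: max_def)
  finally show ?thesis by simp
qed

lemma Youngs_inequality_scaled:
  fixes h A q :: real
  assumes "0 \<le> h" "0 < A" "1 < q"
  shows "h \<le> A * ((h / A) powr q / q + (1 - 1/q))"
proof -
  have "(h / A) * 1 \<le> (h / A) powr q / q + 1 powr (q/(q-1)) / (q/(q-1))"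
    using assms by (intro Youngs_inequality) (auto simp: field_simps)
  then have "h / A \<le> (h / A) powr q / q + (1 - 1/q)" using assms(3) by (simp add: field_simps)
  then show ?thesis using assms(2) by (simp add: field_simps)
qed

lemma (in finite_measure) nn_integral_abs_deviation_le:
  assumes w: "w \<in> borel_measurable M" and q: "1 < q" and K: "0 < K"
    and W: "0 < measure M (space M)"
    and I: "(\<integral>\<^sup>+x. ennreal (\<bar>w x - m\<bar> powr q) \<partial>M) \<le> ennreal K"
  shows "(\<integral>\<^sup>+x. ennreal \<bar>w x - m\<bar> \<partial>M)
    \<le> ennreal ((K / measure M (space M)) powr (1/q) * measure M (space M))"
proof -
  define W where "W = measure M (space M)"
  define A where "A = (K / W) powr (1/q)"
  have A0: "A > 0" unfolding A_def using K W by (simp add: W_def)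
  have Aq: "A powr q = K / W" unfolding A_def using K W q by (simp add: W_def powr_powr)
  define c1 where "c1 = A * W / (q * K)"
  define c2 where "c2 = A * (1 - 1/q)"
  have c10: "c1 \<ge> 0" and c20: "c2 \<ge> 0" unfolding c1_def c2_def using A0 W K q by (auto simp: W_def)
  have young: "\<bar>w x - m\<bar> \<le> c1 * \<bar>w x - m\<bar> powr q + c2" for x
    using Youngs_inequality_scaled[of "\<bar>w x - m\<bar>" A q] A0 q K W
    unfolding c1_def c2_def by (simp add: powr_divide Aq W_def field_simps)
  have "(\<integral>\<^sup>+x. ennreal \<bar>w x - m\<bar> \<partial>M)
      \<le> (\<integral>\<^sup>+x. ennreal c1 * ennreal (\<bar>w x - m\<bar> powr q) + ennreal c2 \<partial>M)"
    using young c10 c20 by (intro nn_integral_mono) (simp add: ennreal_leI flip: ennreal_plus ennreal_mult)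
  also have "\<dots> = ennreal c1 * (\<integral>\<^sup>+x. ennreal (\<bar>w x - m\<bar> powr q) \<partial>M) + ennreal c2 * emeasure M (space M)"
    using w by (simp add: nn_integral_add nn_integral_cmult)
  also have "\<dots> \<le> ennreal c1 * ennreal K + ennreal c2 * ennreal W"
    using I unfolding W_def by (intro add_mono mult_left_mono) (auto simp: emeasure_eq_measure)
  also have "\<dots> = ennreal (c1 * K + c2 * W)"
    using c10 c20 K W by (simp add: W_def ennreal_plus ennreal_mult)
  also have "c1 * K + c2 * W = A * W" unfolding c1_def c2_def using K q by (simp add: field_simps)
  finally show ?thesis unfolding A_def W_def .
qed

lemma (in finite_measure) mean_deviation_le:
  assumes w: "w \<in> borel_measurable M" and q: "1 < q" and K: "0 < K"
    and W: "0 < measure M (space M)"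
    and I: "(\<integral>\<^sup>+x. ennreal (\<bar>w x - m\<bar> powr q) \<partial>M) \<le> ennreal K"
  shows "\<bar>integral\<^sup>L M w / measure M (space M) - m\<bar> \<le> (K / measure M (space M)) powr (1/q)"
proof -
  define W where "W = measure M (space M)"
  define A where "A = (K / W) powr (1/q)"
  have J: "(\<integral>\<^sup>+x. ennreal \<bar>w x - m\<bar> \<partial>M) \<le> ennreal (A * W)"
    using nn_integral_abs_deviation_le[OF assms] unfolding A_def W_def .
  have int_dev: "integrable M (\<lambda>x. w x - m)"
  proof (rule integrableI_bounded)
    show "(\<integral>\<^sup>+x. ennreal (norm (w x - m)) \<partial>M) < \<infinity>"
      using J by (simp add: le_less_trans[OF _ ennreal_less_top])
  qed (use w in measurable)
  then have int_w: "integrable M w"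
    using Bochner_Integration.integrable_add[OF int_dev integrable_const[of m]] by simp
  have "\<bar>integral\<^sup>L M (\<lambda>x. w x - m)\<bar> \<le> integral\<^sup>L M (\<lambda>x. \<bar>w x - m\<bar>)"
    by (rule integral_abs_bound)
  also have "\<dots> = enn2real (\<integral>\<^sup>+x. ennreal \<bar>w x - m\<bar> \<partial>M)"
    using w by (subst integral_eq_nn_integral) auto
  also have "\<dots> \<le> A * W" using J K W unfolding A_def W_def by (simp add: enn2real_leI)
  finally have "\<bar>integral\<^sup>L M (\<lambda>x. w x - m)\<bar> \<le> A * W" .
  moreover have "integral\<^sup>L M (\<lambda>x. w x - m) = integral\<^sup>L M w - m * W"
    using int_w unfolding W_def by (simp add: Bochner_Integration.integral_diff)
  ultimately show ?thesis
    using W unfolding W_def[symmetric] A_def[symmetric]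
    by (simp add: field_simps abs_divide divide_le_eq)
qed

lemma (in finite_measure) nn_integral_powr_mean_deviation_le:
  assumes w: "w \<in> borel_measurable M" and q: "1 < q" and K: "0 < K"
    and W: "0 < measure M (space M)"
    and I: "(\<integral>\<^sup>+x. ennreal (\<bar>w x - m\<bar> powr q) \<partial>M) \<le> ennreal K"
  shows "(\<integral>\<^sup>+x. ennreal (\<bar>w x - integral\<^sup>L M w / measure M (space M)\<bar> powr q) \<partial>M)
    \<le> ennreal (2 powr q * (2 * K))"
proof -
  define W where "W = measure M (space M)"
  define A where "A = (K / W) powr (1/q)"
  have W0: "0 < W" using W unfolding W_def .
  have Aq: "A powr q = K / W" unfolding A_def using K W0 q by (simp add: powr_powr)
  have am: "\<bar>integral\<^sup>L M w / W - m\<bar> \<le> A"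
    using mean_deviation_le[OF assms] unfolding W_def A_def .
  have "(\<integral>\<^sup>+x. ennreal (\<bar>w x - integral\<^sup>L M w / W\<bar> powr q) \<partial>M)
      \<le> (\<integral>\<^sup>+x. ennreal (2 powr q) * ennreal (\<bar>w x - m\<bar> powr q) + ennreal (2 powr q * A powr q) \<partial>M)"
  proof (rule nn_integral_mono)
    fix x
    have "\<bar>w x - integral\<^sup>L M w / W\<bar> powr q \<le> (\<bar>w x - m\<bar> + A) powr q"
      using am q by (intro powr_mono2) auto
    also have "\<dots> \<le> 2 powr q * (\<bar>w x - m\<bar> powr q + A powr q)"
      using am q by (intro powr_add_le_two_powr) auto
    finally show "ennreal (\<bar>w x - integral\<^sup>L M w / W\<bar> powr q)
        \<le> ennreal (2 powr q) * ennreal (\<bar>w x - m\<bar> powr q) + ennreal (2 powr q * A powr q)"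
      by (simp add: ennreal_leI algebra_simps flip: ennreal_plus ennreal_mult)
  qed
  also have "\<dots> = ennreal (2 powr q) * (\<integral>\<^sup>+x. ennreal (\<bar>w x - m\<bar> powr q) \<partial>M)
      + ennreal (2 powr q * A powr q) * emeasure M (space M)"
    using w by (simp add: nn_integral_add nn_integral_cmult)
  also have "\<dots> \<le> ennreal (2 powr q) * ennreal K + ennreal (2 powr q * A powr q) * ennreal W"
    using I unfolding W_def by (intro add_mono mult_left_mono) (auto simp: emeasure_eq_measure)
  also have "\<dots> = ennreal (2 powr q * (2 * K))"
    unfolding Aq using K W0 by (simp add: field_simps flip: ennreal_plus ennreal_mult)
  finally show ?thesis unfolding W_def .
qed

text \<open>Scaling \<open>g\<close> instead of \<open>F\<close> avoids any measurability requirement on \<open>F\<close>.\<close>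
lemma nn_integral_le_if_pointwise_le:
  assumes g: "g \<in> borel_measurable M" and K: "0 < K"
    and pointwise: "\<And>x. x \<in> space M \<Longrightarrow> g x \<le> ennreal K * F x"
    and F: "(\<integral>\<^sup>+x. F x \<partial>M) \<le> 1"
  shows "(\<integral>\<^sup>+x. g x \<partial>M) \<le> ennreal K"
proof -
  have "ennreal (1/K) * (\<integral>\<^sup>+x. g x \<partial>M) = (\<integral>\<^sup>+x. ennreal (1/K) * g x \<partial>M)"
    using g by (simp add: nn_integral_cmult)
  also have "\<dots> \<le> (\<integral>\<^sup>+x. F x \<partial>M)"
  proof (rule nn_integral_mono)
    fix x assume "x \<in> space M"
    then have "ennreal (1/K) * g x \<le> ennreal (1/K) * (ennreal K * F x)"
      using pointwise by (intro mult_left_mono) auto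
    also have "\<dots> = F x" using K by (simp add: mult.assoc[symmetric] flip: ennreal_mult)
    finally show "ennreal (1/K) * g x \<le> F x" .
  qed
  finally have "ennreal (1/K) * (\<integral>\<^sup>+x. g x \<partial>M) \<le> 1" using F by simp
  then have "ennreal K * (ennreal (1/K) * (\<integral>\<^sup>+x. g x \<partial>M)) \<le> ennreal K"
    using mult_left_mono[of _ 1 "ennreal K"] by simp
  then show ?thesis using K by (simp add: mult.assoc[symmetric] flip: ennreal_mult)
qed

lemma sets_lebesgue_level:
  fixes f :: "'a::euclidean_space \<Rightarrow> real"
  assumes "\<Omega> \<in> sets lebesgue" "f \<in> borel_measurable (lebesgue_on \<Omega>)"
  shows "{x\<in>\<Omega>. a < f x} \<in> sets lebesgue"
proof -
  have "{x \<in> space (lebesgue_on \<Omega>). a < f x} \<in> sets (lebesgue_on \<Omega>)"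
    using assms(2) unfolding borel_measurable_iff_greater by blast
  then show ?thesis using assms(1) by (simp add: sets_restrict_space_iff)
qed

lemma emeasure_lebesgue_bounded_finite:
  fixes \<Omega> :: "'a::euclidean_space set"
  assumes "bounded \<Omega>"
  shows "emeasure lebesgue \<Omega> < \<infinity>"
proof -
  obtain r where "\<Omega> \<subseteq> ball 0 r" using bounded_subset_ballD[OF assms] by blast
  then have "emeasure lebesgue \<Omega> \<le> emeasure lebesgue (ball (0::'a) r)" by (intro emeasure_mono) auto
  also have "\<dots> < \<infinity>" using emeasure_bounded_finite[of "ball (0::'a) r"] by simp
  finally show ?thesis .
qed

lemma finite_measure_lebesgue_on:
  fixes \<Omega> :: "'a::euclidean_space set"
  assumes "bounded \<Omega>" "\<Omega> \<in> sets lebesgue"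
  shows "finite_measure (lebesgue_on \<Omega>)"
proof (rule finite_measureI)
  have "emeasure (lebesgue_on \<Omega>) \<Omega> = emeasure lebesgue \<Omega>"
    using assms(2) by (intro emeasure_restrict_space) auto
  then show "emeasure (lebesgue_on \<Omega>) (space (lebesgue_on \<Omega>)) \<noteq> \<infinity>"
    using emeasure_lebesgue_bounded_finite[OF assms(1)] assms(2) by simp
qed

lemma exists_median_lebesgue:
  fixes w :: "'a::euclidean_space \<Rightarrow> real"
  assumes bdd: "bounded \<Omega>" and \<Omega>: "\<Omega> \<in> sets lebesgue" and w: "w \<in> borel_measurable (lebesgue_on \<Omega>)"
  obtains m where "\<And>l. 0 < l \<Longrightarrow> 2 * emeasure lebesgue {x\<in>\<Omega>. m + l < w x} \<le> emeasure lebesgue \<Omega>"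
    and "\<And>l. 0 < l \<Longrightarrow> 2 * emeasure lebesgue {x\<in>\<Omega>. w x < m - l} \<le> emeasure lebesgue \<Omega>"
proof -
  have N: "finite_measure (lebesgue_on \<Omega>)" by (rule finite_measure_lebesgue_on[OF bdd \<Omega>])
  have to_emeasure: "2 * emeasure lebesgue S \<le> emeasure lebesgue \<Omega>"
    if "S \<subseteq> \<Omega>" "2 * measure (lebesgue_on \<Omega>) S \<le> measure (lebesgue_on \<Omega>) \<Omega>" for S
  proof -
    have "emeasure lebesgue S = emeasure (lebesgue_on \<Omega>) S" "emeasure lebesgue \<Omega> = emeasure (lebesgue_on \<Omega>) \<Omega>"
      using that(1) \<Omega> by (simp_all add: emeasure_restrict_space)
    moreover have "2 * ennreal (measure (lebesgue_on \<Omega>) S) = ennreal (2 * measure (lebesgue_on \<Omega>) S)"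
      by (simp add: ennreal_mult)
    ultimately show ?thesis
      using that(2) \<Omega> by (simp add: finite_measure.emeasure_eq_measure[OF N] ennreal_leI)
  qed
  obtain m where "\<forall>l>0. 2 * measure (lebesgue_on \<Omega>) {x\<in>\<Omega>. m + l < w x} \<le> measure (lebesgue_on \<Omega>) \<Omega>
      \<and> 2 * measure (lebesgue_on \<Omega>) {x\<in>\<Omega>. w x < m - l} \<le> measure (lebesgue_on \<Omega>) \<Omega>"
    using finite_measure.exists_median[OF N w] \<Omega> by auto
  then show ?thesis using to_emeasure by (intro that[of m]) auto
qed

lemma emeasure_Diff_lower_bound:
  assumes "A \<in> sets M" "E \<in> sets M" "a + ennreal e \<le> emeasure M A" "emeasure M E \<le> ennreal e"
  shows "a \<le> emeasure M (A - E)"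
proof -
  have "a + ennreal e \<le> emeasure M ((A - E) \<union> E)"
    using assms by (metis Un_Diff_cancel2 emeasure_mono order_trans sets.Un sup_ge1)
  also have "\<dots> \<le> emeasure M (A - E) + ennreal e"
    using assms by (intro order_trans[OF emeasure_subadditive] add_left_mono) auto
  finally show ?thesis by (simp add: ennreal_add_left_cancel_le add.commute[of _ "ennreal e"])
qed

section \<open>Besov modulars on regular domains\<close>

definition besov_inner ::
  "real \<Rightarrow> (real \<Rightarrow> real) \<Rightarrow> (real^'n) set \<Rightarrow> (real^'n \<Rightarrow> real) \<Rightarrow> real^'n \<Rightarrow> ennreal" where
  "besov_inner \<beta> \<phi> \<Omega> w x =
     (\<integral>\<^sup>+y\<in>\<Omega>. ennreal (\<phi> (\<bar>w x - w y\<bar> * dist x y powr \<beta>) / dist x y ^ (2 * CARD('n))) \<partial>lebesgue)"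

lemma besov_modular_eq_besov_inner:
  fixes u :: "real^'n \<Rightarrow> real"
  assumes "0 < s"
  shows "besov_modular \<alpha> \<phi> \<Omega> u s = (\<integral>\<^sup>+x\<in>\<Omega>. besov_inner (-\<alpha>) \<phi> \<Omega> (\<lambda>x. u x / s) x \<partial>lebesgue)"
proof -
  have "\<bar>u x - u y\<bar> / (s * dist x y powr \<alpha>) = \<bar>u x / s - u y / s\<bar> * dist x y powr (-\<alpha>)"
    for x y :: "real^'n"
  proof (cases "x = y")
    case False
    have "\<bar>u x / s - u y / s\<bar> = \<bar>u x - u y\<bar> / s" using assms by (simp add: diff_divide_distrib[symmetric])
    then show ?thesis using False assms by (simp add: powr_minus divide_simps)
  qed simp
  then show ?thesis unfolding besov_modular_def besov_inner_def by simp
qed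

lemma besov_inner_mono:
  assumes "young_function \<phi>" "\<And>y. y \<in> \<Omega> \<Longrightarrow> \<bar>v x - v y\<bar> \<le> \<bar>w x - w y\<bar>"
  shows "besov_inner \<beta> \<phi> \<Omega> v x \<le> besov_inner \<beta> \<phi> \<Omega> w x"
  unfolding besov_inner_def
proof (intro nn_integral_mono)
  fix y
  show "ennreal (\<phi> (\<bar>v x - v y\<bar> * dist x y powr \<beta>) / dist x y ^ (2 * CARD('n))) * indicator \<Omega> y
    \<le> ennreal (\<phi> (\<bar>w x - w y\<bar> * dist x y powr \<beta>) / dist x y ^ (2 * CARD('n))) * indicator \<Omega> y"
  proof (cases "y \<in> \<Omega>")
    case True
    have "\<phi> (\<bar>v x - v y\<bar> * dist x y powr \<beta>) \<le> \<phi> (\<bar>w x - w y\<bar> * dist x y powr \<beta>)"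
      using assms(2)[OF True] by (intro young_function_mono[OF assms(1)] mult_right_mono) auto
    then show ?thesis using True by (auto intro!: ennreal_leI divide_right_mono)
  qed simp
qed

lemma besov_inner_uminus: "besov_inner \<beta> \<phi> \<Omega> (\<lambda>x. - w x) = besov_inner \<beta> \<phi> \<Omega> w"
  unfolding besov_inner_def by (simp add: abs_minus_commute)

lemma besov_inner_ge_on_annulus:
  fixes S :: "(real^'n) set"
  assumes young: "young_function \<phi>" and "0 \<le> \<beta>" "S \<subseteq> \<Omega>" "S \<in> sets lebesgue" "0 < \<rho>" "0 \<le> l"
    and annulus: "\<And>y. y \<in> S \<Longrightarrow> \<rho> \<le> dist x y \<and> dist x y < r \<and> l \<le> \<bar>w x - w y\<bar>"
  shows "ennreal (\<phi> (l * \<rho> powr \<beta>) / r ^ (2 * CARD('n))) * emeasure lebesgue S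
    \<le> besov_inner \<beta> \<phi> \<Omega> w x"
proof -
  define c0 where "c0 = \<phi> (l * \<rho> powr \<beta>) / r ^ (2 * CARD('n))"
  have "ennreal c0 * emeasure lebesgue S = (\<integral>\<^sup>+y. ennreal c0 * indicator S y \<partial>lebesgue)"
    using assms by (simp add: nn_integral_cmult_indicator)
  also have "\<dots> \<le> besov_inner \<beta> \<phi> \<Omega> w x"
    unfolding besov_inner_def
  proof (rule nn_integral_mono)
    fix y
    show "ennreal c0 * indicator S y
      \<le> ennreal (\<phi> (\<bar>w x - w y\<bar> * dist x y powr \<beta>) / dist x y ^ (2 * CARD('n))) * indicator \<Omega> y"
    proof (cases "y \<in> S")
      case True
      note y = annulus[OF True]
      have d0: "dist x y > 0" using y assms(5) by linarith
      have "l * \<rho> powr \<beta> \<le> \<bar>w x - w y\<bar> * dist x y powr \<beta>"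
        using y assms by (intro mult_mono powr_mono2) auto
      then have "\<phi> (l * \<rho> powr \<beta>) \<le> \<phi> (\<bar>w x - w y\<bar> * dist x y powr \<beta>)"
        using young_function_mono[OF young] assms by simp
      moreover have "dist x y ^ (2 * CARD('n)) \<le> r ^ (2 * CARD('n))" using y d0 by (intro power_mono) auto
      ultimately have "c0 \<le> \<phi> (\<bar>w x - w y\<bar> * dist x y powr \<beta>) / dist x y ^ (2 * CARD('n))"
        unfolding c0_def using d0 young_function_nonneg[OF young, of "l * \<rho> powr \<beta>"] assms
        by (intro frac_le) auto
      then show ?thesis using True assms(3) by (auto simp: ennreal_leI)
    qed simp
  qed
  finally show ?thesis unfolding c0_def .
qed

lemma besov_norm_bound_if_admissible:
  assumes C: "0 < C"
    and bound: "\<And>s. 0 < s \<Longrightarrow> besov_modular \<alpha> \<phi> \<Omega> u s \<le> 1 \<Longrightarrow> X \<le> ennreal C * ennreal s"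
  shows "X \<le> ennreal C * besov_norm \<alpha> \<phi> \<Omega> u"
proof -
  have "X * ennreal (1/C) \<le> besov_norm \<alpha> \<phi> \<Omega> u" unfolding besov_norm_def
  proof (rule Inf_greatest)
    fix z assume "z \<in> {ennreal s |s. 0 < s \<and> besov_modular \<alpha> \<phi> \<Omega> u s \<le> 1}"
    then obtain s where s: "z = ennreal s" "0 < s" "besov_modular \<alpha> \<phi> \<Omega> u s \<le> 1" by auto
    have "X * ennreal (1/C) \<le> ennreal C * ennreal s * ennreal (1/C)"
      using bound s by (intro mult_right_mono) auto
    also have "\<dots> = z" using C s by (simp flip: ennreal_mult)
    finally show "X * ennreal (1/C) \<le> z" .
  qed
  moreover have "X = ennreal C * (X * ennreal (1/C))" using C
    by (simp add: mult.commute mult.left_commute flip: ennreal_mult)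
  ultimately show ?thesis by (metis mult_left_mono zero_le)
qed

lemma Lp_norm_le_if_nn_integral_le:
  fixes g :: "real^'n \<Rightarrow> real"
  assumes \<Omega>: "\<Omega> \<in> sets lebesgue" and g: "g \<in> borel_measurable (lebesgue_on \<Omega>)"
    and s: "0 < s" and q: "0 < q" and B: "0 \<le> B"
    and I: "(\<integral>\<^sup>+x\<in>\<Omega>. ennreal (\<bar>g x / s\<bar> powr q) \<partial>lebesgue) \<le> ennreal B"
  shows "Lp_norm q \<Omega> g \<le> ennreal (B powr (1/q)) * ennreal s"
proof -
  define I where "I = (\<integral>\<^sup>+x\<in>\<Omega>. ennreal (\<bar>g x\<bar> powr q) \<partial>lebesgue)"
  have "I = (\<integral>\<^sup>+x. ennreal (s powr q) * ennreal (\<bar>g x / s\<bar> powr q) \<partial>(lebesgue_on \<Omega>))"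
    unfolding I_def using \<Omega> s
    by (simp add: nn_integral_restrict_space abs_divide powr_divide flip: ennreal_mult)
  also have "\<dots> = ennreal (s powr q) * (\<integral>\<^sup>+x\<in>\<Omega>. ennreal (\<bar>g x / s\<bar> powr q) \<partial>lebesgue)"
    using g \<Omega> by (simp add: nn_integral_cmult nn_integral_restrict_space)
  also have "\<dots> \<le> ennreal (s powr q * B)"
    using I B by (simp add: mult_left_mono ennreal_mult)
  finally have IB: "I \<le> ennreal (s powr q * B)" .
  then have "enn2real I powr (1/q) \<le> (s powr q * B) powr (1/q)"
    using q B by (intro powr_mono2) (auto simp: enn2real_leI)
  also have "\<dots> = s * B powr (1/q)" using s B q by (simp add: powr_mult powr_powr)
  finally have "ennreal (enn2real I powr (1/q)) \<le> ennreal (B powr (1/q)) * ennreal s"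
    using s B by (simp add: ennreal_leI mult.commute flip: ennreal_mult)
  moreover have "I \<noteq> \<infinity>" using IB by (auto simp: top_unique)
  ultimately show ?thesis unfolding Lp_norm_def Let_def I_def by simp
qed

lemma avg_eq_mean:
  assumes "\<Omega> \<in> sets lebesgue"
  shows "avg \<Omega> w = integral\<^sup>L (lebesgue_on \<Omega>) w / measure (lebesgue_on \<Omega>) (space (lebesgue_on \<Omega>))"
  using assms unfolding avg_def set_lebesgue_integral_def
  by (simp add: integral_restrict_space measure_restrict_space)

lemma avg_divide: "avg \<Omega> (\<lambda>x. u x / s) = avg \<Omega> u / s"
  unfolding avg_def set_lebesgue_integral_def
  using integral_divide_zero[of lebesgue "\<lambda>x. indicator \<Omega> x *\<^sub>R u x" s] by simp

definition ball_regular :: "real \<Rightarrow> (real^'n) set \<Rightarrow> bool" where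
  "ball_regular \<theta> \<Omega> \<longleftrightarrow> (\<forall>x\<in>\<Omega>. \<forall>r>0.
     \<Omega> \<subseteq> ball x r \<or> ennreal (\<theta> * r ^ CARD('n)) \<le> emeasure lebesgue (ball x r \<inter> \<Omega>))"

lemma globally_regular_imp_ball_regular:
  fixes \<Omega> :: "(real^'n) set"
  assumes "globally_regular \<theta> \<Omega>"
  shows "ball_regular \<theta> \<Omega>"
  unfolding ball_regular_def
proof (intro ballI allI impI)
  fix x r assume x: "x \<in> \<Omega>" and r: "(0::real) < r"
  show "\<Omega> \<subseteq> ball x r \<or> ennreal (\<theta> * r ^ CARD('n)) \<le> emeasure lebesgue (ball x r \<inter> \<Omega>)"
  proof (cases "bounded \<Omega> \<and> 2 * diameter \<Omega> \<le> r")
    case True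
    have "\<Omega> \<subseteq> ball x r"
    proof
      fix y assume "y \<in> \<Omega>"
      then have "dist x y \<le> diameter \<Omega>" using diameter_bounded_bound[OF _ x] True by blast
      then show "y \<in> ball x r" using True r diameter_ge_0[of \<Omega>] by simp
    qed
    then show ?thesis ..
  next
    case False
    then show ?thesis using assms x r unfolding globally_regular_def by (auto simp: not_le)
  qed
qed

section \<open>The pointwise estimate\<close>

locale besov_setting =
  fixes \<phi> :: "real \<Rightarrow> real" and \<beta> C \<theta> :: real and \<Omega> :: "(real^'n) set"
  assumes young: "young_function \<phi>"
    and beta_pos: "0 < \<beta>" and beta_le: "\<beta> \<le> real CARD('n)"
    and upper: "upper_type \<phi> (real CARD('n) / \<beta>) C"
    and theta_pos: "0 < \<theta>"
    and Omega_sets: "\<Omega> \<in> sets lebesgue"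
    and Omega_pos: "0 < emeasure lebesgue \<Omega>"
    and regular: "ball_regular \<theta> \<Omega>"
begin

lemma upper_const_pos: "0 < C"
  using upper_type_const_ge_one[OF young upper] by simp

text \<open>Regularity at the radius \<open>r\<close> with \<open>\<theta> r^n = 4e\<close> leaves measure \<open>3e\<close> of
  \<open>ball x r \<inter> \<Omega>\<close> outside \<open>E\<close> (at least \<open>e\<close> if the ball covers \<open>\<Omega>\<close>); removing the ball of
  measure \<open>e/2\<close> around \<open>x\<close> still leaves \<open>e/2\<close>.\<close>
lemma annulus_measure_lower_bound:
  assumes x: "x \<in> \<Omega>" and E: "E \<in> sets lebesgue"
    and e: "0 < e" "emeasure lebesgue E \<le> ennreal e"
    and half: "bounded \<Omega> \<Longrightarrow> ennreal (2 * e) \<le> emeasure lebesgue \<Omega>"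
  shows "ennreal (e/2) \<le> emeasure lebesgue (ball x ((4*e/\<theta>) powr (1/CARD('n))) \<inter> \<Omega> - E
           - ball x ((e / (2 * unit_ball_vol CARD('n))) powr (1/CARD('n))))"
proof -
  define n where "n = CARD('n)"
  have n1: "n \<ge> 1" unfolding n_def by (simp add: Suc_leI)
  define r where "r = (4*e/\<theta>) powr (1/n)"
  define \<rho> where "\<rho> = (e / (2 * unit_ball_vol n)) powr (1/n)"
  have r0: "r > 0" unfolding r_def using e theta_pos by simp
  have rn: "r ^ n = 4*e/\<theta>" unfolding r_def using e theta_pos n1
    by (simp add: powr_realpow[symmetric] powr_powr)
  have \<rho>n: "\<rho> ^ n = e / (2 * unit_ball_vol n)" unfolding \<rho>_def using e n1 unit_ball_vol_of_nat_pos[of n]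
    by (simp add: powr_realpow[symmetric] powr_powr)
  define B where "B = ball x r \<inter> \<Omega>"
  have B: "B \<in> sets lebesgue" unfolding B_def using Omega_sets by auto
  have "ennreal e \<le> emeasure lebesgue (B - E)"
  proof (cases "\<Omega> \<subseteq> ball x r")
    case True
    then have "B = \<Omega>" "bounded \<Omega>" unfolding B_def using bounded_subset[OF bounded_ball] by auto
    then show ?thesis
      using half e E Omega_sets by (intro emeasure_Diff_lower_bound) (auto simp flip: ennreal_plus)
  next
    case False
    then have "ennreal (\<theta> * r ^ n) \<le> emeasure lebesgue B"
      using regular x r0 unfolding ball_regular_def B_def n_def by auto
    then have "ennreal (3 * e) \<le> emeasure lebesgue (B - E)"
      using rn theta_pos e E B by (intro emeasure_Diff_lower_bound) (auto simp flip: ennreal_plus)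
    then show ?thesis using e by (auto intro: order_trans[rotated])
  qed
  moreover have "emeasure lebesgue (ball x \<rho>) = ennreal (unit_ball_vol n * \<rho> ^ n)"
    using emeasure_ball[where c=x and r=\<rho>] by (simp add: n_def \<rho>_def)
  then have "emeasure lebesgue (ball x \<rho>) = ennreal (e/2)"
    using \<rho>n unit_ball_vol_of_nat_pos[of n] by simp
  ultimately have "ennreal (e/2) \<le> emeasure lebesgue (B - E - ball x \<rho>)"
    using e E B by (intro emeasure_Diff_lower_bound[where A="B - E" and e="e/2"])
      (auto simp flip: ennreal_plus)
  then show ?thesis unfolding B_def r_def \<rho>_def n_def .
qed

lemma besov_inner_lower_bound:
  assumes x: "x \<in> \<Omega>" and E: "E \<in> sets lebesgue"
    and e: "0 < e" "emeasure lebesgue E \<le> ennreal e"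
    and half: "bounded \<Omega> \<Longrightarrow> ennreal (2 * e) \<le> emeasure lebesgue \<Omega>"
    and l: "0 < l" and far: "\<And>y. y \<in> \<Omega> - E \<Longrightarrow> l \<le> \<bar>w x - w y\<bar>"
  shows "ennreal (\<theta>^2/32 * ball_profile \<phi> CARD('n) \<beta> (l powr (real CARD('n) / \<beta>) * e) / e)
    \<le> besov_inner \<beta> \<phi> \<Omega> w x"
proof -
  define n where "n = CARD('n)"
  have n1: "n \<ge> 1" unfolding n_def by (simp add: Suc_leI)
  define r where "r = (4*e/\<theta>) powr (1/n)"
  define \<rho> where "\<rho> = (e / (2 * unit_ball_vol n)) powr (1/n)"
  define S where "S = ball x r \<inter> \<Omega> - E - ball x \<rho>"
  have S: "ennreal (e/2) \<le> emeasure lebesgue S"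
    using annulus_measure_lower_bound[OF x E e half] unfolding S_def r_def \<rho>_def n_def .
  have \<rho>0: "\<rho> > 0" unfolding \<rho>_def using e unit_ball_vol_of_nat_pos[of n] by simp
  have "r ^ n = 4*e/\<theta>" unfolding r_def using e theta_pos n1
    by (simp add: powr_realpow[symmetric] powr_powr)
  then have rn: "r ^ (2*n) = (4*e/\<theta>)^2" by (metis power_mult mult.commute)
  define c0 where "c0 = \<phi> (l * \<rho> powr \<beta>) / r ^ (2*n)"
  have c00: "c0 \<ge> 0" unfolding c0_def using young_function_nonneg[OF young] l \<rho>0 by simp
  have "\<phi> (l * \<rho> powr \<beta>) = ball_profile \<phi> n \<beta> (l powr (real n / \<beta>) * e)"
    unfolding \<rho>_def using e beta_pos l n1 unit_ball_vol_of_nat_pos[of n]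
    by (simp add: powr_powr ball_profile_rescale)
  then have "ennreal (\<theta>^2/32 * ball_profile \<phi> n \<beta> (l powr (real n / \<beta>) * e) / e) = ennreal c0 * ennreal (e/2)"
    using e theta_pos c00 unfolding c0_def rn by (simp add: field_simps power2_eq_square flip: ennreal_mult)
  also have "\<dots> \<le> ennreal c0 * emeasure lebesgue S" using S by (intro mult_left_mono) auto
  also have "\<dots> \<le> besov_inner \<beta> \<phi> \<Omega> w x"
    unfolding c0_def n_def
  proof (rule besov_inner_ge_on_annulus[OF young _ _ _ \<rho>0])
    show "S \<in> sets lebesgue" unfolding S_def using Omega_sets E by (intro sets.Diff sets.Int) auto
    show "\<rho> \<le> dist x y \<and> dist x y < r \<and> l \<le> \<bar>w x - w y\<bar>" if "y \<in> S" for y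
      using that far unfolding S_def by auto
  qed (use beta_pos l in \<open>auto simp: S_def\<close>)
  finally show ?thesis unfolding n_def .
qed

end

text \<open>\<open>v\<close> plays the part of \<open>(w - m)\<^sub>+\<close>; \<open>levels_half\<close> is where the median \<open>m\<close> enters,
  and it is vacuous for unbounded \<open>\<Omega>\<close>.\<close>
locale besov_levels = besov_setting \<phi> \<beta> C \<theta> \<Omega>
  for \<phi> :: "real \<Rightarrow> real" and \<beta> C \<theta> :: real and \<Omega> :: "(real^'n) set" +
  fixes v :: "real^'n \<Rightarrow> real" and A :: real
  assumes v_meas: "v \<in> borel_measurable (lebesgue_on \<Omega>)"
    and levels_bounded: "\<And>l. 0 < l \<Longrightarrow> emeasure lebesgue {x\<in>\<Omega>. l < v x} \<le> ennreal A"
    and levels_half: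
      "\<And>l. 0 < l \<Longrightarrow> bounded \<Omega> \<Longrightarrow> 2 * emeasure lebesgue {x\<in>\<Omega>. l < v x} \<le> emeasure lebesgue \<Omega>"
    and modular_le_one: "(\<integral>\<^sup>+x\<in>\<Omega>. besov_inner \<beta> \<phi> \<Omega> v x \<partial>lebesgue) \<le> 1"
begin

lemma level_sets: "{x\<in>\<Omega>. l < v x} \<in> sets lebesgue"
  by (rule sets_lebesgue_level[OF Omega_sets v_meas])

lemma emeasure_level:
  assumes "0 < l"
  shows "emeasure lebesgue {x\<in>\<Omega>. l < v x} = ennreal (measure lebesgue {x\<in>\<Omega>. l < v x})"
  using levels_bounded[OF assms] by (intro emeasure_eq_ennreal_measure) (auto simp: top_unique)

lemma besov_inner_level_lower_bound:
  assumes x: "x \<in> \<Omega>" and l: "0 < l" "2 * l \<le> v x"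
    and e: "0 < e" "measure lebesgue {x\<in>\<Omega>. l < v x} \<le> e"
    and half: "bounded \<Omega> \<Longrightarrow> ennreal (2 * e) \<le> emeasure lebesgue \<Omega>"
  shows "ennreal (\<theta>^2/32 * ball_profile \<phi> CARD('n) \<beta> (l powr (real CARD('n) / \<beta>) * e) / e)
    \<le> besov_inner \<beta> \<phi> \<Omega> v x"
proof (rule besov_inner_lower_bound[OF x level_sets e(1) _ half l(1)])
  show "emeasure lebesgue {x\<in>\<Omega>. l < v x} \<le> ennreal e"
    using emeasure_level[OF l(1)] e(2) by (simp add: ennreal_leI)
  show "l \<le> \<bar>v x - v y\<bar>" if "y \<in> \<Omega> - {x\<in>\<Omega>. l < v x}" for y
    using that l by auto
qed

lemma measure_level_antimono:
  assumes "0 < l" "l \<le> l'"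
  shows "measure lebesgue {x\<in>\<Omega>. l' < v x} \<le> measure lebesgue {x\<in>\<Omega>. l < v x}"
proof -
  have "emeasure lebesgue {x\<in>\<Omega>. l' < v x} \<le> emeasure lebesgue {x\<in>\<Omega>. l < v x}"
    using assms level_sets by (intro emeasure_mono) auto
  then show ?thesis using emeasure_level assms by (simp add: ennreal_le_iff)
qed

lemma measure_level_le:
  assumes "0 < l"
  shows "measure lebesgue {x\<in>\<Omega>. l < v x} \<le> max A 0" (* ennreal A = 0 for negative A *)
proof -
  have "ennreal (measure lebesgue {x\<in>\<Omega>. l < v x}) \<le> ennreal A"
    using levels_bounded[OF assms] emeasure_level[OF assms] by simp
  then show ?thesis by (cases "0 \<le> A") (auto simp: ennreal_neg)
qed

text \<open>Integrate the lower bound over \<open>{l < v}\<close>, with \<open>E = {l/2 < v}\<close>.\<close>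
lemma level_halving_recursion:
  assumes l: "0 < l" and pos: "0 < measure lebesgue {x\<in>\<Omega>. l/2 < v x}"
  shows "measure lebesgue {x\<in>\<Omega>. l < v x} * (\<theta>^2/32) * ball_profile \<phi> CARD('n) \<beta>
      ((l/2) powr (real CARD('n) / \<beta>) * measure lebesgue {x\<in>\<Omega>. l/2 < v x})
      / measure lebesgue {x\<in>\<Omega>. l/2 < v x} \<le> 1"
proof -
  define e where "e = measure lebesgue {x\<in>\<Omega>. l/2 < v x}"
  define K where "K = \<theta>^2/32 * ball_profile \<phi> CARD('n) \<beta> ((l/2) powr (real CARD('n) / \<beta>) * e) / e"
  have K0: "K \<ge> 0"
    unfolding K_def using ball_profile_pos[OF young] pos l by (simp add: e_def less_imp_le)
  have "ennreal (K * measure lebesgue {x\<in>\<Omega>. l < v x}) = ennreal K * emeasure lebesgue {x\<in>\<Omega>. l < v x}"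
    using emeasure_level[OF l] K0 by (simp add: ennreal_mult)
  also have "\<dots> = (\<integral>\<^sup>+x. ennreal K * indicator {x\<in>\<Omega>. l < v x} x \<partial>lebesgue)"
    using level_sets by (simp add: nn_integral_cmult_indicator)
  also have "\<dots> \<le> (\<integral>\<^sup>+x\<in>\<Omega>. besov_inner \<beta> \<phi> \<Omega> v x \<partial>lebesgue)"
  proof (rule nn_integral_mono)
    fix x
    have "ennreal K \<le> besov_inner \<beta> \<phi> \<Omega> v x" if x: "x \<in> \<Omega>" "l < v x"
      unfolding K_def
    proof (rule besov_inner_level_lower_bound)
      show "bounded \<Omega> \<Longrightarrow> ennreal (2 * e) \<le> emeasure lebesgue \<Omega>"
        using levels_half[of "l/2"] emeasure_level[of "l/2"] l unfolding e_def
        by (simp add: ennreal_mult)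
    qed (use x l pos in \<open>auto simp: e_def\<close>)
    then show "ennreal K * indicator {x\<in>\<Omega>. l < v x} x \<le> besov_inner \<beta> \<phi> \<Omega> v x * indicator \<Omega> x"
      by (auto split: split_indicator)
  qed
  also have "\<dots> \<le> 1" by (rule modular_le_one)
  finally have "K * measure lebesgue {x\<in>\<Omega>. l < v x} \<le> 1" by (simp add: ennreal_le_1)
  then show ?thesis unfolding K_def e_def by (simp add: field_simps)
qed

lemma level_weak_type:
  assumes "0 < l"
  shows "l powr (real CARD('n) / \<beta>) * measure lebesgue {x\<in>\<Omega>. l < v x}
    \<le> profile_bound \<phi> CARD('n) \<beta> \<theta> C"
proof -
  have "halving_recursion (real CARD('n) / \<beta>) (\<theta>^2/32) C (max A 0)
    (ball_profile \<phi> CARD('n) \<beta>) (\<lambda>l. measure lebesgue {x\<in>\<Omega>. l < v x})"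
  proof
    show "1 \<le> real CARD('n) / \<beta>" using beta_pos beta_le by simp
    show "ball_profile \<phi> CARD('n) \<beta> t' \<le> C * (t'/t) * ball_profile \<phi> CARD('n) \<beta> t"
      if "0 < t" "t \<le> t'" for t t'
      using beta_pos upper that by (intro ball_profile_doubling) (auto simp: Suc_leI)
    show "t powr (1 / (real CARD('n) / \<beta>)) * ball_profile \<phi> CARD('n) \<beta> 1
        \<le> ball_profile \<phi> CARD('n) \<beta> t" if "1 \<le> t" for t
      using ball_profile_growth[OF young beta_pos that] by simp
  qed (use theta_pos measure_level_antimono measure_level_le level_halving_recursion
      ball_profile_pos[OF young] in auto)
  from halving_recursion.weak_type[OF this assms] show ?thesis unfolding profile_bound_def .
qed

lemma exists_level_budget:
  assumes "0 < l"
  obtains e where "0 < e" "measure lebesgue {x\<in>\<Omega>. l < v x} \<le> e"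
    "l powr (real CARD('n) / \<beta>) * e \<le> profile_bound \<phi> CARD('n) \<beta> \<theta> C"
    "bounded \<Omega> \<Longrightarrow> ennreal (2 * e) \<le> emeasure lebesgue \<Omega>"
proof (cases "measure lebesgue {x\<in>\<Omega>. l < v x} = 0")
  case False
  then have "0 < measure lebesgue {x\<in>\<Omega>. l < v x}"
    using measure_nonneg[of lebesgue "{x\<in>\<Omega>. l < v x}"] by linarith
  then show ?thesis
    using level_weak_type[OF assms] levels_half[OF assms] emeasure_level[OF assms]
    by (intro that[of "measure lebesgue {x\<in>\<Omega>. l < v x}"]) (auto simp: ennreal_mult)
next
  case True
  define q where "q = real CARD('n) / \<beta>"
  define T where "T = profile_bound \<phi> CARD('n) \<beta> \<theta> C"
  obtain e0 where e0: "0 < e0" "ennreal (2 * e0) \<le> emeasure lebesgue \<Omega>"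
  proof (cases "emeasure lebesgue \<Omega> = \<infinity>")
    case True
    then show ?thesis using that[of 1] by simp
  next
    case False
    then have "emeasure lebesgue \<Omega> = ennreal (measure lebesgue \<Omega>)"
      by (simp add: emeasure_eq_ennreal_measure)
    then show ?thesis
      using that[of "measure lebesgue \<Omega> / 2"] Omega_pos by (simp add: ennreal_less_zero_iff)
  qed
  define e where "e = min e0 (T / l powr q)"
  have "0 < e" unfolding e_def T_def using e0 profile_bound_ge_one assms
    by (simp add: order_less_le_trans[OF zero_less_one])
  moreover have "l powr q * e \<le> T" unfolding e_def using assms by (simp add: min_def field_simps)
  moreover have "ennreal (2 * e) \<le> emeasure lebesgue \<Omega>"
    using e0 unfolding e_def by (auto intro: order.trans[rotated] ennreal_leI)
  ultimately show ?thesis using that True unfolding q_def T_def by simp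
qed

text \<open>Take \<open>l = v x / 2\<close> and \<open>e\<close> from \<open>exists_level_budget\<close> in the lower bound; as
  \<open>l powr q * e\<close> stays below \<open>T = profile_bound \<dots>\<close>, the doubling of \<open>ball_profile\<close> turns
  \<open>\<psi>(l powr q * e) / e\<close> into a multiple of \<open>l powr q\<close>.\<close>
lemma pointwise_bound:
  assumes x: "x \<in> \<Omega>" and vx: "0 < v x"
  shows "ennreal (v x powr (real CARD('n) / \<beta>))
    \<le> ennreal (pointwise_const \<phi> CARD('n) \<beta> \<theta> C) * besov_inner \<beta> \<phi> \<Omega> v x"
proof -
  define n where "n = CARD('n)"
  have n1: "1 \<le> n" unfolding n_def by (simp add: Suc_leI)
  define q where "q = real n / \<beta>"
  define c where "c = \<theta>^2/32"
  have c0: "0 < c" unfolding c_def using theta_pos by simp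
  define \<psi> where "\<psi> = ball_profile \<phi> n \<beta>"
  define T where "T = profile_bound \<phi> n \<beta> \<theta> C"
  have T1: "1 \<le> T" unfolding T_def by (rule profile_bound_ge_one)
  have psT: "\<psi> T > 0" unfolding \<psi>_def using ball_profile_pos[OF young] T1 by simp
  define K0 where "K0 = pointwise_const \<phi> n \<beta> \<theta> C"
  have K0: "K0 = 2 powr q * C * T / (c * \<psi> T)"
    unfolding K0_def pointwise_const_def T_def c_def \<psi>_def q_def ..
  have K00: "K0 > 0" unfolding K0 using upper_const_pos T1 c0 psT by simp
  define l where "l = v x / 2"
  have l: "0 < l" "2 * l \<le> v x" unfolding l_def using vx by auto
  obtain e where e: "0 < e" "measure lebesgue {x\<in>\<Omega>. l < v x} \<le> e"
      "l powr (real CARD('n) / \<beta>) * e \<le> profile_bound \<phi> CARD('n) \<beta> \<theta> C"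
    and half: "bounded \<Omega> \<Longrightarrow> ennreal (2 * e) \<le> emeasure lebesgue \<Omega>"
    by (rule exists_level_budget[OF l(1)]) auto
  define t where "t = l powr q * e"
  have t0: "0 < t" unfolding t_def using l e by simp
  have tT: "t \<le> T" using e(3) unfolding t_def q_def n_def T_def .
  have "\<psi> T \<le> C * (T / t) * \<psi> t"
    unfolding \<psi>_def using ball_profile_doubling[OF beta_pos n1 _ t0 tT] upper
    unfolding n_def by simp
  then have key: "\<psi> T * l powr q / (C * T) \<le> \<psi> t / e"
    using t0 e upper_const_pos T1 l unfolding t_def by (simp add: field_simps)
  have "v x powr q = 2 powr q * l powr q" unfolding l_def using vx by (simp add: powr_divide)
  also have "\<dots> = K0 * (c * (\<psi> T * l powr q / (C * T)))"
    unfolding K0 using upper_const_pos T1 c0 psT by (simp add: field_simps)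
  also have "\<dots> \<le> K0 * (c * (\<psi> t / e))" using key K00 c0 by (intro mult_left_mono) auto
  finally have vle: "v x powr q \<le> K0 * (c * \<psi> t / e)" by simp
  have "0 \<le> c * \<psi> t / e" unfolding \<psi>_def using c0 e ball_profile_pos[OF young t0, of n \<beta>] by simp
  then have "ennreal (v x powr q) \<le> ennreal K0 * ennreal (c * \<psi> t / e)"
    using vle K00 by (simp add: ennreal_leI flip: ennreal_mult)
  also have "ennreal (c * \<psi> t / e) \<le> besov_inner \<beta> \<phi> \<Omega> v x"
    unfolding c_def \<psi>_def t_def q_def n_def
    by (rule besov_inner_level_lower_bound[OF x l e(1) e(2) half])
  finally show ?thesis using K00 unfolding K0_def q_def n_def by (simp add: mult_left_mono)
qed

end

context besov_setting
begin

lemma pointwise_bound_above_level: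
  assumes g: "g \<in> borel_measurable (lebesgue_on \<Omega>)"
    and levels_bounded: "\<And>l. 0 < l \<Longrightarrow> emeasure lebesgue {x\<in>\<Omega>. c + l < g x} \<le> ennreal A"
    and levels_half:
      "\<And>l. 0 < l \<Longrightarrow> bounded \<Omega> \<Longrightarrow> 2 * emeasure lebesgue {x\<in>\<Omega>. c + l < g x} \<le> emeasure lebesgue \<Omega>"
    and modular: "(\<integral>\<^sup>+x\<in>\<Omega>. besov_inner \<beta> \<phi> \<Omega> g x \<partial>lebesgue) \<le> 1"
    and x: "x \<in> \<Omega>" "c < g x"
  shows "ennreal ((g x - c) powr (real CARD('n) / \<beta>))
    \<le> ennreal (pointwise_const \<phi> CARD('n) \<beta> \<theta> C) * besov_inner \<beta> \<phi> \<Omega> g x"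
proof -
  define v where "v y = max (g y - c) 0" for y
  have inner: "besov_inner \<beta> \<phi> \<Omega> v y \<le> besov_inner \<beta> \<phi> \<Omega> g y" for y
    by (rule besov_inner_mono[OF young]) (auto simp: v_def)
  have levels: "{y\<in>\<Omega>. l < v y} = {y\<in>\<Omega>. c + l < g y}" if "0 < l" for l
    unfolding v_def using that by auto
  have levels: "besov_levels \<phi> \<beta> C \<theta> \<Omega> v A"
  proof (intro besov_levels.intro besov_setting_axioms besov_levels_axioms.intro)
    show "v \<in> borel_measurable (lebesgue_on \<Omega>)" unfolding v_def using g by measurable
    have "(\<integral>\<^sup>+x\<in>\<Omega>. besov_inner \<beta> \<phi> \<Omega> v x \<partial>lebesgue)
        \<le> (\<integral>\<^sup>+x\<in>\<Omega>. besov_inner \<beta> \<phi> \<Omega> g x \<partial>lebesgue)"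
      by (intro nn_integral_mono mult_right_mono inner) simp
    then show "(\<integral>\<^sup>+x\<in>\<Omega>. besov_inner \<beta> \<phi> \<Omega> v x \<partial>lebesgue) \<le> 1"
      using modular by order
  qed (use levels levels_bounded levels_half in auto)
  have "ennreal ((g x - c) powr (real CARD('n) / \<beta>))
      \<le> ennreal (pointwise_const \<phi> CARD('n) \<beta> \<theta> C) * besov_inner \<beta> \<phi> \<Omega> v x"
    using besov_levels.pointwise_bound[OF levels x(1)] x(2) by (simp add: v_def)
  also have "\<dots> \<le> ennreal (pointwise_const \<phi> CARD('n) \<beta> \<theta> C) * besov_inner \<beta> \<phi> \<Omega> g x"
    by (intro mult_left_mono inner) simp
  finally show ?thesis .
qed

lemma besov_inner_pointwise_deviation:
  assumes bdd: "bounded \<Omega>" and w: "w \<in> borel_measurable (lebesgue_on \<Omega>)"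
    and modular: "(\<integral>\<^sup>+x\<in>\<Omega>. besov_inner \<beta> \<phi> \<Omega> w x \<partial>lebesgue) \<le> 1"
  obtains m where "\<And>x. x \<in> \<Omega> \<Longrightarrow> ennreal (\<bar>w x - m\<bar> powr (real CARD('n) / \<beta>))
    \<le> ennreal (pointwise_const \<phi> CARD('n) \<beta> \<theta> C) * besov_inner \<beta> \<phi> \<Omega> w x"
proof -
  define q where "q = real CARD('n) / \<beta>"
  define K0 where "K0 = pointwise_const \<phi> CARD('n) \<beta> \<theta> C"
  obtain m where med_above: "\<And>l. 0 < l \<Longrightarrow> 2 * emeasure lebesgue {x\<in>\<Omega>. m + l < w x} \<le> emeasure lebesgue \<Omega>"
    and med_below: "\<And>l. 0 < l \<Longrightarrow> 2 * emeasure lebesgue {x\<in>\<Omega>. w x < m - l} \<le> emeasure lebesgue \<Omega>"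
    using exists_median_lebesgue[OF bdd Omega_sets w] by blast
  have W: "emeasure lebesgue \<Omega> = ennreal (measure lebesgue \<Omega>)"
    using emeasure_lebesgue_bounded_finite[OF bdd] by (simp add: emeasure_eq_ennreal_measure)
  have above: "ennreal ((g x - c) powr q) \<le> ennreal K0 * besov_inner \<beta> \<phi> \<Omega> w x"
    if g: "g = w \<and> c = m \<or> g = (\<lambda>y. - w y) \<and> c = - m" and x: "x \<in> \<Omega>" "c < g x" for g c x
  proof -
    have inner: "besov_inner \<beta> \<phi> \<Omega> g = besov_inner \<beta> \<phi> \<Omega> w"
      using g besov_inner_uminus by auto
    have meas: "g \<in> borel_measurable (lebesgue_on \<Omega>)" using g w by auto
    have half: "2 * emeasure lebesgue {x\<in>\<Omega>. c + l < g x} \<le> emeasure lebesgue \<Omega>" if "0 < l" for l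
      using med_above[OF that] med_below[OF that] g by (auto simp: algebra_simps)
    have "ennreal ((g x - c) powr q) \<le> ennreal K0 * besov_inner \<beta> \<phi> \<Omega> g x"
      unfolding q_def K0_def
    proof (rule pointwise_bound_above_level[where A="measure lebesgue \<Omega>", OF meas])
      show "emeasure lebesgue {x\<in>\<Omega>. c + l < g x} \<le> ennreal (measure lebesgue \<Omega>)" if "0 < l" for l
        using half[OF that] W by (auto intro: order_trans[rotated] simp: mult_2)
    qed (use half modular inner x in auto)
    then show ?thesis using inner by simp
  qed
  show ?thesis
  proof (rule that)
    fix x assume x: "x \<in> \<Omega>"
    consider "m < w x" | "w x < m" | "w x = m" by linarith
    then show "ennreal (\<bar>w x - m\<bar> powr (real CARD('n) / \<beta>))
        \<le> ennreal (pointwise_const \<phi> CARD('n) \<beta> \<theta> C) * besov_inner \<beta> \<phi> \<Omega> w x"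
    proof cases
      case 1
      then show ?thesis using above[of w m x] x unfolding q_def K0_def by simp
    next
      case 2
      then show ?thesis using above[of "\<lambda>y. - w y" "- m" x] x unfolding q_def K0_def by simp
    qed simp
  qed
qed

lemma nn_integral_deviation_avg_le:
  assumes beta: "\<beta> < real CARD('n)"
    and bdd: "bounded \<Omega>" and w: "w \<in> borel_measurable (lebesgue_on \<Omega>)"
    and modular: "(\<integral>\<^sup>+x\<in>\<Omega>. besov_inner \<beta> \<phi> \<Omega> w x \<partial>lebesgue) \<le> 1"
  shows "(\<integral>\<^sup>+x\<in>\<Omega>. ennreal (\<bar>w x - avg \<Omega> w\<bar> powr (real CARD('n) / \<beta>)) \<partial>lebesgue)
    \<le> ennreal (2 powr (real CARD('n) / \<beta>) * (2 * pointwise_const \<phi> CARD('n) \<beta> \<theta> C))"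
proof -
  define q where "q = real CARD('n) / \<beta>"
  define K0 where "K0 = pointwise_const \<phi> CARD('n) \<beta> \<theta> C"
  have K0: "0 < K0" unfolding K0_def using pointwise_const_pos[OF young theta_pos upper_const_pos] .
  have q: "1 < q" unfolding q_def using beta_pos beta by simp
  have N: "finite_measure (lebesgue_on \<Omega>)" by (rule finite_measure_lebesgue_on[OF bdd Omega_sets])
  have W: "0 < measure (lebesgue_on \<Omega>) (space (lebesgue_on \<Omega>))"
  proof -
    have "emeasure (lebesgue_on \<Omega>) \<Omega> = emeasure lebesgue \<Omega>"
      using Omega_sets by (intro emeasure_restrict_space) auto
    then have "0 < emeasure (lebesgue_on \<Omega>) (space (lebesgue_on \<Omega>))"
      using Omega_pos Omega_sets by simp
    then show ?thesis by (simp add: finite_measure.emeasure_eq_measure[OF N])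
  qed
  obtain m where pointwise: "\<And>x. x \<in> \<Omega> \<Longrightarrow> ennreal (\<bar>w x - m\<bar> powr q) \<le> ennreal K0 * besov_inner \<beta> \<phi> \<Omega> w x"
    using besov_inner_pointwise_deviation[OF bdd w modular] unfolding q_def K0_def by blast
  have "(\<integral>\<^sup>+x. ennreal (\<bar>w x - m\<bar> powr q) \<partial>lebesgue_on \<Omega>) \<le> ennreal K0"
    using pointwise modular Omega_sets K0 w
    by (intro nn_integral_le_if_pointwise_le[where F="besov_inner \<beta> \<phi> \<Omega> w"])
      (auto simp: nn_integral_restrict_space)
  from finite_measure.nn_integral_powr_mean_deviation_le[OF N w q K0 W this]
  show ?thesis using Omega_sets
    unfolding q_def K0_def avg_eq_mean[OF Omega_sets] by (simp add: nn_integral_restrict_space)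
qed

lemma besov_inner_pointwise_if_unbounded:
  assumes unbdd: "\<not> bounded \<Omega>" and w: "w \<in> borel_measurable (lebesgue_on \<Omega>)"
    and levels_finite: "\<And>a. 0 < a \<Longrightarrow> emeasure lebesgue {x\<in>\<Omega>. a < \<bar>w x\<bar>} < \<infinity>"
    and modular: "(\<integral>\<^sup>+x\<in>\<Omega>. besov_inner \<beta> \<phi> \<Omega> w x \<partial>lebesgue) \<le> 1"
    and x: "x \<in> \<Omega>"
  shows "ennreal (\<bar>w x\<bar> powr (real CARD('n) / \<beta>))
    \<le> ennreal (2 powr (real CARD('n) / \<beta>) * pointwise_const \<phi> CARD('n) \<beta> \<theta> C) * besov_inner \<beta> \<phi> \<Omega> w x"
proof (cases "w x = 0")
  case False
  define q where "q = real CARD('n) / \<beta>"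
  define K0 where "K0 = pointwise_const \<phi> CARD('n) \<beta> \<theta> C"
  have K0: "0 < K0" unfolding K0_def using pointwise_const_pos[OF young theta_pos upper_const_pos] .
  define c where "c = \<bar>w x\<bar> / 2"
  have c: "0 < c" unfolding c_def using False by simp
  obtain g where g: "g = w \<or> g = (\<lambda>y. - w y)" and gx: "g x = \<bar>w x\<bar>"
    by (cases "0 \<le> w x") auto
  have inner: "besov_inner \<beta> \<phi> \<Omega> g = besov_inner \<beta> \<phi> \<Omega> w"
    using g besov_inner_uminus by auto
  define E where "E = {y\<in>\<Omega>. c < \<bar>w y\<bar>}"
  have E: "E \<in> sets lebesgue" "emeasure lebesgue E < \<infinity>"
    unfolding E_def using levels_finite[OF c] w by (auto intro!: sets_lebesgue_level[OF Omega_sets])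
  have "ennreal ((g x - c) powr q) \<le> ennreal K0 * besov_inner \<beta> \<phi> \<Omega> g x"
    unfolding q_def K0_def
  proof (rule pointwise_bound_above_level[where A="enn2real (emeasure lebesgue E)"])
    show "g \<in> borel_measurable (lebesgue_on \<Omega>)" using g w by auto
    show "emeasure lebesgue {x\<in>\<Omega>. c + l < g x} \<le> ennreal (enn2real (emeasure lebesgue E))"
      if "0 < l" for l
    proof -
      have "{x\<in>\<Omega>. c + l < g x} \<subseteq> E" unfolding E_def using g that by auto
      then have "emeasure lebesgue {x\<in>\<Omega>. c + l < g x} \<le> emeasure lebesgue E"
        using E(1) by (rule emeasure_mono)
      then show ?thesis using E(2) by (simp add: ennreal_enn2real)
    qed
  qed (use unbdd modular inner x gx c_def False in auto)
  then have "ennreal (2 powr q) * ennreal (c powr q) \<le> ennreal (2 powr q) * (ennreal K0 * besov_inner \<beta> \<phi> \<Omega> w x)"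
    using inner gx unfolding c_def by (intro mult_left_mono) simp_all
  moreover have "ennreal (\<bar>w x\<bar> powr q) = ennreal (2 powr q) * ennreal (c powr q)"
    unfolding c_def by (simp add: powr_divide flip: ennreal_mult)
  moreover have "ennreal (2 powr q) * (ennreal K0 * besov_inner \<beta> \<phi> \<Omega> w x)
      = ennreal (2 powr q * K0) * besov_inner \<beta> \<phi> \<Omega> w x"
    using K0 by (simp add: ennreal_mult mult.assoc)
  ultimately show ?thesis unfolding q_def K0_def by simp
qed (use beta_pos in simp)

lemma nn_integral_powr_le_if_unbounded:
  assumes unbdd: "\<not> bounded \<Omega>" and w: "w \<in> borel_measurable (lebesgue_on \<Omega>)"
    and levels_finite: "\<And>a. 0 < a \<Longrightarrow> emeasure lebesgue {x\<in>\<Omega>. a < \<bar>w x\<bar>} < \<infinity>"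
    and modular: "(\<integral>\<^sup>+x\<in>\<Omega>. besov_inner \<beta> \<phi> \<Omega> w x \<partial>lebesgue) \<le> 1"
  shows "(\<integral>\<^sup>+x\<in>\<Omega>. ennreal (\<bar>w x\<bar> powr (real CARD('n) / \<beta>)) \<partial>lebesgue)
    \<le> ennreal (2 powr (real CARD('n) / \<beta>) * pointwise_const \<phi> CARD('n) \<beta> \<theta> C)"
proof -
  have "(\<integral>\<^sup>+x. ennreal (\<bar>w x\<bar> powr (real CARD('n) / \<beta>)) \<partial>lebesgue_on \<Omega>)
      \<le> ennreal (2 powr (real CARD('n) / \<beta>) * pointwise_const \<phi> CARD('n) \<beta> \<theta> C)"
    using besov_inner_pointwise_if_unbounded[OF assms] modular Omega_sets w
      pointwise_const_pos[OF young theta_pos upper_const_pos]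
    by (intro nn_integral_le_if_pointwise_le[where F="besov_inner \<beta> \<phi> \<Omega> w"])
      (auto simp: nn_integral_restrict_space)
  then show ?thesis using Omega_sets by (simp add: nn_integral_restrict_space)
qed

lemma Lp_norm_deviation_le_besov_norm:
  assumes beta: "\<beta> < real CARD('n)" and bdd: "bounded \<Omega>" and u: "u \<in> besov_space (-\<beta>) \<phi> \<Omega>"
  shows "Lp_norm (real CARD('n) / \<beta>) \<Omega> (\<lambda>x. u x - avg \<Omega> u)
    \<le> ennreal ((2 powr (real CARD('n) / \<beta>) * (2 * pointwise_const \<phi> CARD('n) \<beta> \<theta> C))
                  powr (\<beta> / real CARD('n))) * besov_norm (-\<beta>) \<phi> \<Omega> u"
proof (rule besov_norm_bound_if_admissible)
  define q where "q = real CARD('n) / \<beta>"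
  define B where "B = 2 powr q * (2 * pointwise_const \<phi> CARD('n) \<beta> \<theta> C)"
  have B: "0 < B" unfolding B_def using pointwise_const_pos[OF young theta_pos upper_const_pos] by simp
  then have "0 < B powr (\<beta> / real CARD('n))" by simp
  then show "0 < (2 powr (real CARD('n) / \<beta>) * (2 * pointwise_const \<phi> CARD('n) \<beta> \<theta> C))
                  powr (\<beta> / real CARD('n))" unfolding B_def q_def .
  have um: "u \<in> borel_measurable (lebesgue_on \<Omega>)" using u unfolding besov_space_def by simp
  fix s assume s: "0 < s" and admissible: "besov_modular (-\<beta>) \<phi> \<Omega> u s \<le> 1"
  define w where "w x = u x / s" for x
  have w: "w \<in> borel_measurable (lebesgue_on \<Omega>)" unfolding w_def using um by measurable
  have "(\<integral>\<^sup>+x\<in>\<Omega>. besov_inner \<beta> \<phi> \<Omega> w x \<partial>lebesgue) \<le> 1"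
    using admissible besov_modular_eq_besov_inner[OF s, where \<alpha>="-\<beta>" and \<phi>=\<phi> and \<Omega>=\<Omega> and u=u] unfolding w_def[abs_def] by simp
  from nn_integral_deviation_avg_le[OF beta bdd w this]
  have "(\<integral>\<^sup>+x\<in>\<Omega>. ennreal (\<bar>(u x - avg \<Omega> u) / s\<bar> powr q) \<partial>lebesgue) \<le> ennreal B"
    unfolding w_def avg_divide q_def B_def using s by (simp add: diff_divide_distrib)
  from Lp_norm_le_if_nn_integral_le[OF Omega_sets _ s _ _ this]
  show "Lp_norm (real CARD('n) / \<beta>) \<Omega> (\<lambda>x. u x - avg \<Omega> u)
    \<le> ennreal ((2 powr (real CARD('n) / \<beta>) * (2 * pointwise_const \<phi> CARD('n) \<beta> \<theta> C))
                  powr (\<beta> / real CARD('n))) * ennreal s"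
    using um B beta_pos unfolding q_def B_def by simp
qed

lemma Lp_norm_le_besov_norm_if_unbounded:
  assumes unbdd: "\<not> bounded \<Omega>" and u: "u \<in> besov_space (-\<beta>) \<phi> \<Omega>"
    and levels_finite: "\<And>a. 0 < a \<Longrightarrow> emeasure lebesgue {x\<in>\<Omega>. a < \<bar>u x\<bar>} < \<infinity>"
  shows "Lp_norm (real CARD('n) / \<beta>) \<Omega> u
    \<le> ennreal ((2 powr (real CARD('n) / \<beta>) * pointwise_const \<phi> CARD('n) \<beta> \<theta> C)
                  powr (\<beta> / real CARD('n))) * besov_norm (-\<beta>) \<phi> \<Omega> u"
proof (rule besov_norm_bound_if_admissible)
  define q where "q = real CARD('n) / \<beta>"
  define B where "B = 2 powr q * pointwise_const \<phi> CARD('n) \<beta> \<theta> C"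
  have B: "0 < B" unfolding B_def using pointwise_const_pos[OF young theta_pos upper_const_pos] by simp
  then have "0 < B powr (\<beta> / real CARD('n))" by simp
  then show "0 < (2 powr (real CARD('n) / \<beta>) * pointwise_const \<phi> CARD('n) \<beta> \<theta> C)
                  powr (\<beta> / real CARD('n))" unfolding B_def q_def .
  have um: "u \<in> borel_measurable (lebesgue_on \<Omega>)" using u unfolding besov_space_def by simp
  fix s assume s: "0 < s" and admissible: "besov_modular (-\<beta>) \<phi> \<Omega> u s \<le> 1"
  define w where "w x = u x / s" for x
  have w: "w \<in> borel_measurable (lebesgue_on \<Omega>)" unfolding w_def using um by measurable
  have "emeasure lebesgue {x\<in>\<Omega>. a < \<bar>w x\<bar>} < \<infinity>" if "0 < a" for a
    using levels_finite[of "a * s"] that s unfolding w_def by (simp add: abs_divide field_simps)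
  moreover have "(\<integral>\<^sup>+x\<in>\<Omega>. besov_inner \<beta> \<phi> \<Omega> w x \<partial>lebesgue) \<le> 1"
    using admissible besov_modular_eq_besov_inner[OF s, where \<alpha>="-\<beta>" and \<phi>=\<phi> and \<Omega>=\<Omega> and u=u] unfolding w_def[abs_def] by simp
  ultimately have "(\<integral>\<^sup>+x\<in>\<Omega>. ennreal (\<bar>u x / s\<bar> powr q) \<partial>lebesgue) \<le> ennreal B"
    using nn_integral_powr_le_if_unbounded[OF unbdd w] unfolding w_def q_def B_def by simp
  from Lp_norm_le_if_nn_integral_le[OF Omega_sets um s _ _ this]
  show "Lp_norm (real CARD('n) / \<beta>) \<Omega> u
    \<le> ennreal ((2 powr (real CARD('n) / \<beta>) * pointwise_const \<phi> CARD('n) \<beta> \<theta> C)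
                  powr (\<beta> / real CARD('n))) * ennreal s"
    using B beta_pos unfolding q_def B_def by simp
qed

end

lemma besov_setting_if_globally_regular:
  fixes \<Omega> :: "(real^'n) set"
  assumes "young_function \<phi>" "0 < \<beta>" "\<beta> \<le> real CARD('n)" "upper_type \<phi> (real CARD('n) / \<beta>) C"
    "0 < \<theta>" "domain \<Omega>" "globally_regular \<theta> \<Omega>"
  shows "besov_setting \<phi> \<beta> C \<theta> \<Omega>"
proof
  have "open \<Omega>" "\<Omega> \<noteq> {}" using assms(6) unfolding domain_def by auto
  then show "0 < emeasure lebesgue \<Omega>" by (rule emeasure_lebesgue_open_pos)
  show "\<Omega> \<in> sets lebesgue" using \<open>open \<Omega>\<close> by simp
  show "ball_regular \<theta> \<Omega>" using globally_regular_imp_ball_regular[OF assms(7)] .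
qed (use assms in auto)

theorem lemma3p2:
  fixes \<phi> :: "real \<Rightarrow> real" and \<alpha> \<theta> :: real
  assumes "CARD('n::finite) \<ge> 2"
    and "- real CARD('n) < \<alpha>" and "\<alpha> < 0"
    and "young_function \<phi>"
    and "Lambda_lower CARD('n) \<phi> \<alpha> < \<infinity>"
    and "Lambda_upper CARD('n) \<phi> \<alpha> < \<infinity>"
    and "0 < \<theta>" and "\<theta> < 1"
  shows
    "(\<exists>C>0. \<forall>(\<Omega>::(real^'n) set) u.
        domain \<Omega> \<and> bounded \<Omega> \<and> globally_regular \<theta> \<Omega> \<and> u \<in> besov_space \<alpha> \<phi> \<Omega> \<longrightarrow>
        Lp_norm (real CARD('n) / \<bar>\<alpha>\<bar>) \<Omega> (\<lambda>x. u x - avg \<Omega> u)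
          \<le> ennreal C * besov_norm \<alpha> \<phi> \<Omega> u)
   \<and> (\<exists>C>0. \<forall>(\<Omega>::(real^'n) set) u.
        domain \<Omega> \<and> \<not> bounded \<Omega> \<and> globally_regular \<theta> \<Omega> \<and> u \<in> besov_space \<alpha> \<phi> \<Omega> \<and>
        (\<forall>a>0. emeasure lebesgue {x\<in>\<Omega>. \<bar>u x\<bar> > a} < \<infinity>) \<longrightarrow>
        Lp_norm (real CARD('n) / \<bar>\<alpha>\<bar>) \<Omega> u \<le> ennreal C * besov_norm \<alpha> \<phi> \<Omega> u)"
proof -
  define \<beta> where "\<beta> = - \<alpha>"
  define C where "C = 2 ^ (CARD('n) + 1) * enn2real (Lambda_upper CARD('n) \<phi> \<alpha>)"
  define K where "K = pointwise_const \<phi> CARD('n) \<beta> \<theta> C"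
  have \<alpha>: "\<alpha> = -\<beta>" "\<bar>\<beta>\<bar> = \<beta>" "\<beta> < real CARD('n)" using assms(2,3) unfolding \<beta>_def by auto
  have upper: "upper_type \<phi> (real CARD('n) / \<beta>) C"
    using upper_type_if_Lambda_upper_finite[OF assms(4,3,6)] unfolding \<beta>_def C_def .
  have K: "0 < K" unfolding K_def
    using pointwise_const_pos[OF assms(4,7)] upper_type_const_ge_one[OF assms(4) upper] by simp
  have setting: "besov_setting \<phi> \<beta> C \<theta> \<Omega>"
    if "domain \<Omega>" "globally_regular \<theta> \<Omega>" for \<Omega> :: "(real^'n) set"
    using besov_setting_if_globally_regular[OF assms(4) _ _ upper assms(7) that] \<alpha>(3) assms(3)
    unfolding \<beta>_def by simp
  define C\<^sub>b where "C\<^sub>b = (2 powr (real CARD('n) / \<beta>) * (2 * K)) powr (\<beta> / real CARD('n))"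
  define C\<^sub>u where "C\<^sub>u = (2 powr (real CARD('n) / \<beta>) * K) powr (\<beta> / real CARD('n))"
  have "0 < C\<^sub>b" "0 < C\<^sub>u" unfolding C\<^sub>b_def C\<^sub>u_def using K by simp_all
  show ?thesis (is "?bounded \<and> ?unbounded")
  proof
    show ?bounded
      using \<open>0 < C\<^sub>b\<close> besov_setting.Lp_norm_deviation_le_besov_norm[OF setting \<alpha>(3)]
      by (intro exI[of _ C\<^sub>b] conjI allI impI) (auto simp: \<alpha> C\<^sub>b_def K_def)
    show ?unbounded
      using \<open>0 < C\<^sub>u\<close> besov_setting.Lp_norm_le_besov_norm_if_unbounded[OF setting]
      by (intro exI[of _ C\<^sub>u] conjI allI impI) (auto simp: \<alpha> C\<^sub>u_def K_def)
  qed
qed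

end
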